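(* Let $(R,pR)$ be a discrete valuation domain with valuation $\mathsf{v}$ and finite residue field. Let $f\in R[x]$ be a primitive, non-constant polynomial with $n:=\mathsf{v}(\operatorname{d}(f))\in\mathbb{N}$ (so $n\ge1$), and assume that $f$ is not a proper power of another polynomial in $R[x]$ (i.e. $f$ is not associated to $h^k$ for any $h\in R[x]$ and integer $k\ge 2$). Then $\frac{f}{p^n}$ is absolutely irreducible in $\operatorname{Int}(R)$ if and only if $\operatorname{fdk}(f)=\mathbf{0}$.
   Context: $(R,pR)$ is a discrete valuation domain with valuation $\mathsf{v}$, finite residue field, and quotient field $K$. $\operatorname{Int}(R)=\{F\in K[x]\mid F(R)\subseteq R\}$. For $f\in R[x]$, $\operatorname{d}(f)=\gcd(f(a)\mid a\in R)$, so $\mathsf{v}(\operatorname{d}(f))=\min_{a\in R}\mathsf{v}(f(a))$. Primitive means the coefficients generate $R$. An irreducible divisor set $\mathcal{P}$ of $f$ is a set of representatives of the associate classes of irreducible divisors of $f$ in $R[x]$. $\mathcal{W}(f)=\{a\in R\mid \mathsf{v}(f(a))=\mathsf{v}(\operatorname{d}(f))\}$, and $$\operatorname{fdk}(f)=\Big\{(u_g)_{g\in\mathcal{P}}\in\mathbb{Q}^{\mathcal{P}}\ \Big|\ \forall a\in\mathcal{W}(f):\ \textstyle\sum_{g\in\mathcal{P}}u_g\,\mathsf{v}(g(a))=0\Big\}$$ (whether it is zero does not depend on the choice of $\mathcal{P}$). An irreducible element $r$ of a commutative ring is absolutely irreducible if for every $k\in\mathbb{N}$ every factorization of $r^k$ into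 irreducibles is essentially the same as $r\cdots r$ (same number of factors, pairwise associated after reindexing). *)

theory Defs
  imports "HOL-Computational_Algebra.Computational_Algebra"
begin

definition dvr_with_uniformizer :: "'a::idom \<Rightarrow> bool" where
  "dvr_with_uniformizer p \<longleftrightarrow> p \<noteq> 0 \<and> \<not> p dvd 1 \<and>
     (\<forall>a. a \<noteq> 0 \<longrightarrow> (\<exists>u k. u dvd 1 \<and> a = u * p ^ k))"

definition finite_residue_field :: "'a::idom \<Rightarrow> bool" where
  "finite_residue_field p \<longleftrightarrow> finite (range (\<lambda>a. {b. p dvd (a - b)}))"

definition val :: "'a::idom \<Rightarrow> 'a \<Rightarrow> nat" where
  "val p a = Max {k. p ^ k dvd a}"

text \<open>v(d(f)) = min over a in R of v(f(a)) (v(0) = infinity, so zeros of f are ignored).\<close>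
definition vd :: "'a::idom \<Rightarrow> 'a poly \<Rightarrow> nat" where
  "vd p f = (LEAST k. \<exists>a. poly f a \<noteq> 0 \<and> val p (poly f a) = k)"

definition W_set :: "'a::idom \<Rightarrow> 'a poly \<Rightarrow> 'a set" where
  "W_set p f = {a. poly f a \<noteq> 0 \<and> val p (poly f a) = vd p f}"

definition primitive_poly :: "'a::idom poly \<Rightarrow> bool" where
  "primitive_poly f \<longleftrightarrow> (\<exists>c. (\<Sum>i\<le>degree f. c i * coeff f i) = 1)"

definition assoc_poly :: "'a::idom poly \<Rightarrow> 'a poly \<Rightarrow> bool" where
  "assoc_poly g h \<longleftrightarrow> g dvd h \<and> h dvd g"

definition irreducible_divisor_set :: "'a::idom poly \<Rightarrow> 'a poly set \<Rightarrow> bool" where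
  "irreducible_divisor_set f P \<longleftrightarrow>
     (\<forall>g\<in>P. irreducible g \<and> g dvd f) \<and>
     (\<forall>g. irreducible g \<and> g dvd f \<longrightarrow> (\<exists>q\<in>P. assoc_poly g q)) \<and>
     (\<forall>g\<in>P. \<forall>h\<in>P. assoc_poly g h \<longrightarrow> g = h)"

text \<open>fdk(f) = 0: the only rational vector indexed by P orthogonal to all
valuation vectors (v(g(a)))_{g in P}, a in W(f), is zero.\<close>
definition fdk_zero :: "'a::idom \<Rightarrow> 'a poly \<Rightarrow> 'a poly set \<Rightarrow> bool" where
  "fdk_zero p f P \<longleftrightarrow>
     (\<forall>u :: 'a poly \<Rightarrow> rat.
        (\<forall>a\<in>W_set p f. (\<Sum>g\<in>P. u g * of_nat (val p (poly g a))) = 0) \<longrightarrow>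
        (\<forall>g\<in>P. u g = 0))"

definition IntR :: "'a::idom fract poly set" where
  "IntR = {F. \<forall>a. poly F (to_fract a) \<in> range to_fract}"

definition IntR_unit :: "'a::idom fract poly \<Rightarrow> bool" where
  "IntR_unit F \<longleftrightarrow> F \<in> IntR \<and> (\<exists>G\<in>IntR. F * G = 1)"

definition IntR_irreducible :: "'a::idom fract poly \<Rightarrow> bool" where
  "IntR_irreducible F \<longleftrightarrow> F \<in> IntR \<and> F \<noteq> 0 \<and> \<not> IntR_unit F \<and>
     (\<forall>G\<in>IntR. \<forall>H\<in>IntR. F = G * H \<longrightarrow> IntR_unit G \<or> IntR_unit H)"

definition IntR_assoc :: "'a::idom fract poly \<Rightarrow> 'a fract poly \<Rightarrow> bool" where
  "IntR_assoc F G \<longleftrightarrow> (\<exists>u. IntR_unit u \<and> F = u * G)"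

definition IntR_abs_irreducible :: "'a::idom fract poly \<Rightarrow> bool" where
  "IntR_abs_irreducible F \<longleftrightarrow> IntR_irreducible F \<and>
     (\<forall>k::nat. k \<ge> 1 \<longrightarrow> (\<forall>qs. (\<forall>q\<in>set qs. IntR_irreducible q) \<and> prod_list qs = F ^ k \<longrightarrow>
        length qs = k \<and> (\<forall>q\<in>set qs. IntR_assoc q F)))"

end

theory Submission
  imports Defs
begin

text \<open>Write F = f/p^n. Every nonzero G in K[x] is u g/p^m with u a unit and g primitive, m being
  unique and additive by Gauss's lemma. If F^k = G H in Int(R), the exponents of G and H add up
  to kn, each is at most the valuation of its numerator at every point, and at the points of W
  these valuations also add up to kn; so the exponent of G equals v(g(b)) for all b in W. The
  exponent vector of g over the irreducible factors of f therefore has constant valuation on W.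
  If fdk(f) = 0 it is proportional to the exponent vector of f, and since f is not a proper power,
  G is a unit times a power of F; absolute irreducibility follows by counting degrees.
  Conversely, a nonzero integer vector z in fdk(f) gives, for N large, two non-units of Int(R)
  whose numerators have exponents N a_g + z_g and N a_g - z_g over p^(Nn) and whose product is
  F^(2N); if F were absolutely irreducible, both would be associated to powers of F, forcing z = 0.\<close>

lemma is_unit_mult: "a dvd 1 \<Longrightarrow> b dvd 1 \<Longrightarrow> a * b dvd (1::'a::comm_semiring_1)"
  using mult_dvd_mono[of a 1 b 1] by simp

lemma is_unit_power: "a dvd 1 \<Longrightarrow> a ^ n dvd (1::'a::comm_semiring_1)"
  using dvd_power_same[of a 1 n] by simp

lemma prime_elem_dvd_prod:
  assumes "prime_elem q" "finite A" "q dvd (\<Prod>x\<in>A. F x)"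
  shows "\<exists>x\<in>A. q dvd F x"
  using assms(2,3)
proof (induction A rule: finite_induct)
  case empty
  then show ?case using assms(1) by (simp add: prime_elem_not_unit)
next
  case (insert x A)
  then show ?case using prime_elem_dvd_multD[OF assms(1)] by auto
qed

lemma to_fract_power [simp]: "to_fract (x ^ n) = to_fract x ^ n"
  by (induction n) simp_all

lemma poly_fract_poly: "poly (fract_poly g) (to_fract a) = to_fract (poly g a)"
  by (induction g) (auto simp: map_poly_pCons)

lemma to_fract_unit_inverse: "u dvd 1 \<Longrightarrow> \<exists>w. w dvd 1 \<and> inverse (to_fract u) = to_fract w"
  by (metis dvdE dvd_triv_right inverse_unique mult.commute to_fract_1 to_fract_mult)

lemma dvd_smult_unit_iff:
  fixes h :: "'a::comm_semiring_1 poly"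
  assumes "w dvd 1"
  shows "g dvd smult w h \<longleftrightarrow> g dvd h"
proof
  obtain w' where "1 = w * w'" using assms by (rule dvdE)
  moreover assume "g dvd smult w h"
  ultimately show "g dvd h" using dvd_smult[of g "smult w h" w'] by (simp add: mult.commute)
qed (rule dvd_smult)

lemma smult_unit_sym:
  fixes a :: "'a::comm_semiring_1 poly"
  assumes "w dvd 1" "a = smult w b"
  shows "\<exists>w'. w' dvd 1 \<and> b = smult w' a"
proof -
  obtain w' where "1 = w * w'" using assms(1) by (rule dvdE)
  then have "b = smult w' a" using assms(2) by (simp add: mult.commute)
  then show ?thesis using \<open>1 = w * w'\<close> by (metis dvdI mult.commute)
qed

lemma prod_list_remove1: "x \<in> set xs \<Longrightarrow> prod_list xs = x * prod_list (remove1 x xs)"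
  for xs :: "'a::comm_monoid_mult list"
  by (induction xs) (auto simp: mult.left_commute)

lemma common_factor_if_not_dvd:
  fixes n M :: nat and a e :: "'x \<Rightarrow> nat"
  assumes n: "n \<ge> 1" and proportional: "\<forall>x\<in>A. e x * n = a x * M" and not_dvd: "\<not> n dvd M"
  shows "\<exists>d\<ge>2. \<forall>x\<in>A. d dvd a x"
proof -
  define c where "c = gcd n M"
  define d where "d = n div c"
  define M' where "M' = M div c"
  have c: "c > 0" "n = d * c" "M = M' * c" unfolding c_def d_def M'_def using n by simp_all
  have "coprime d M'" unfolding d_def M'_def c_def using n by (intro div_gcd_coprime) auto
  have "d dvd a x" if "x \<in> A" for x
  proof -
    have "(e x * d) * c = (a x * M') * c" using proportional that c by (simp add: mult.assoc)
    then have "e x * d = a x * M'" using c(1) by simp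
    then have "d dvd a x * M'" by (metis dvd_triv_right)
    then show ?thesis using \<open>coprime d M'\<close> by (simp add: coprime_dvd_mult_left_iff)
  qed
  moreover have "d \<noteq> 1" using not_dvd c by auto
  moreover have "d \<noteq> 0" using n c by auto
  ultimately show ?thesis by (intro exI[of _ d]) auto
qed

lemma rat_vector_common_denominator:
  fixes u :: "'b \<Rightarrow> rat"
  assumes "finite A"
  shows "\<exists>D z. D > 0 \<and> (\<forall>x\<in>A. of_int (z x) = u x * of_int D)"
proof -
  define D where "D = (\<Prod>x\<in>A. snd (quotient_of (u x)))"
  have "D > 0" unfolding D_def using quotient_of_denom_pos' by (intro prod_pos) auto
  define z where "z x = fst (quotient_of (u x)) * (D div snd (quotient_of (u x)))" for x
  have "of_int (z x) = u x * of_int D" if "x \<in> A" for x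
  proof -
    obtain a b where ab: "quotient_of (u x) = (a, b)" by (cases "quotient_of (u x)")
    have "b dvd D" unfolding D_def using that assms ab by (metis dvd_prod_eqI snd_conv)
    then have "of_int (z x) = (of_int a * (of_int D / of_int b) :: rat)"
      unfolding z_def ab by (simp add: of_int_div)
    also have "\<dots> = u x * of_int D" unfolding quotient_of_div[OF ab] by simp
    finally show ?thesis .
  qed
  then show ?thesis using \<open>D > 0\<close> by blast
qed

lemma large_multiple_dominates:
  fixes N C V n S :: int
  assumes "C * (n + 1) < N" "C \<ge> 0" "V \<ge> n + 1" "- C * V \<le> S" "n \<ge> 0"
  shows "N * n \<le> N * V + S"
proof -
  have "C * 1 \<le> C * (n + 1)" using assms(2,5) by (intro mult_left_mono) auto
  then have "(N - C) * (n + 1) \<le> (N - C) * V" using assms by (intro mult_left_mono) auto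
  moreover have "(N - C) * (n + 1) = N * n + (N - C * (n + 1))" by (simp add: algebra_simps)
  ultimately show ?thesis using assms(1,4) by (simp add: algebra_simps)
qed

section \<open>Integer-valued polynomials\<close>

lemma IntR_mult:
  assumes "F \<in> IntR" "G \<in> IntR"
  shows "F * G \<in> IntR"
  unfolding IntR_def
proof (intro CollectI allI)
  fix a
  obtain x y where "poly F (to_fract a) = to_fract x" "poly G (to_fract a) = to_fract y"
    using assms unfolding IntR_def by blast
  then have "poly (F * G) (to_fract a) = to_fract (x * y)" by simp
  then show "poly (F * G) (to_fract a) \<in> range to_fract" by (simp only: rangeI)
qed

lemma IntR_const: "[:to_fract c:] \<in> IntR"
  unfolding IntR_def by auto

lemma IntR_one: "1 \<in> IntR"
  using IntR_const[of 1] by (simp add: one_pCons)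

lemma IntR_power: "F \<in> IntR \<Longrightarrow> F ^ k \<in> IntR"
  by (induction k) (auto simp: IntR_mult IntR_one)

lemma IntR_smult: "F \<in> IntR \<Longrightarrow> smult (to_fract c) F \<in> IntR"
  using IntR_mult[OF IntR_const] by simp

lemma IntR_unit_iff: "IntR_unit G \<longleftrightarrow> (\<exists>v. v dvd 1 \<and> G = [:to_fract v:])"
proof
  assume "IntR_unit G"
  then obtain H where H: "G \<in> IntR" "H \<in> IntR" "G * H = 1" unfolding IntR_unit_def by blast
  then have "G dvd 1" "H dvd 1" by (auto intro: dvdI[of 1 G H] dvdI[of 1 H G] simp: mult.commute)
  then obtain c d where cd: "G = [:c:]" "H = [:d:]" by (auto simp: is_unit_poly_iff)
  have "poly G (to_fract 0) \<in> range to_fract" "poly H (to_fract 0) \<in> range to_fract"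
    using H(1,2) unfolding IntR_def by blast+
  then obtain v w where vw: "c = to_fract v" "d = to_fract w" using cd by auto
  have "[:c * d:] = 1" using H(3) cd by (simp add: mult.commute)
  then have "to_fract (v * w) = to_fract 1" using vw by (simp add: one_pCons)
  then have "v * w = 1" by (simp only: to_fract_eq_iff)
  then show "\<exists>v. v dvd 1 \<and> G = [:to_fract v:]" using cd vw by (auto intro: dvdI[of 1 v w])
next
  assume "\<exists>v. v dvd 1 \<and> G = [:to_fract v:]"
  then obtain v w where vw: "G = [:to_fract v:]" "1 = v * w" by (auto elim: dvdE)
  then have "G * [:to_fract w:] = 1" by (simp add: one_pCons mult.commute flip: to_fract_mult)
  then show "IntR_unit G" unfolding IntR_unit_def using IntR_const vw(1) by blast
qed

lemma not_IntR_unit_if_degree: "degree G \<ge> 1 \<Longrightarrow> \<not> IntR_unit G"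
  unfolding IntR_unit_iff by auto

lemma IntR_prod_list: "(\<And>q. q \<in> set qs \<Longrightarrow> q \<in> IntR) \<Longrightarrow> prod_list qs \<in> IntR"
  by (induction qs) (auto simp: IntR_one IntR_mult)

section \<open>Valuation and p-primitive polynomials\<close>

locale dvr =
  fixes p :: "'a::idom"
  assumes dvr_with_uniformizer: "dvr_with_uniformizer p"
begin

lemma uniformizer_nonzero: "p \<noteq> 0"
  and uniformizer_not_unit: "\<not> p dvd 1"
  and unit_times_uniformizer_power: "a \<noteq> 0 \<Longrightarrow> \<exists>u k. u dvd 1 \<and> a = u * p ^ k"
  using dvr_with_uniformizer unfolding dvr_with_uniformizer_def by auto

lemma uniformizer_not_dvd_unit: "u dvd 1 \<Longrightarrow> \<not> p dvd u"
  using uniformizer_not_unit dvd_trans by blast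

lemma power_dvd_unit_times_power_iff:
  assumes "u dvd 1"
  shows "p ^ j dvd u * p ^ k \<longleftrightarrow> j \<le> k"
proof
  assume dvd: "p ^ j dvd u * p ^ k"
  show "j \<le> k"
  proof (rule ccontr)
    assume "\<not> j \<le> k"
    then have "p ^ k * p dvd p ^ j" by (metis le_imp_power_dvd not_less_eq_eq power_Suc2)
    with dvd have "p ^ k * p dvd p ^ k * u" by (metis dvd_trans mult.commute)
    then have "p dvd u" using uniformizer_nonzero by simp
    with assms show False using uniformizer_not_dvd_unit by blast
  qed
qed (simp add: le_imp_power_dvd)

lemma val_unit_times_power: "u dvd 1 \<Longrightarrow> val p (u * p ^ k) = k"
  unfolding val_def using power_dvd_unit_times_power_iff
  by (auto intro!: Max_eqI)

lemma valE:
  assumes "a \<noteq> 0"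
  obtains u where "u dvd 1" "a = u * p ^ val p a"
  using unit_times_uniformizer_power[OF assms] val_unit_times_power by metis

lemma power_dvd_iff_le_val: "a \<noteq> 0 \<Longrightarrow> p ^ j dvd a \<longleftrightarrow> j \<le> val p a"
  by (metis valE power_dvd_unit_times_power_iff)

lemma val_mult:
  assumes "a \<noteq> 0" "b \<noteq> 0"
  shows "val p (a * b) = val p a + val p b"
proof -
  obtain u w where u: "u dvd 1" "a = u * p ^ val p a" and w: "w dvd 1" "b = w * p ^ val p b"
    using valE assms by metis
  have "a * b = (u * w) * p ^ (val p a + val p b)"
    using arg_cong2[OF u(2) w(2), of "(*)"] by (simp add: power_add mult_ac)
  then show ?thesis using is_unit_mult[OF u(1) w(1)] by (simp add: val_unit_times_power)
qed

lemma val_unit: "u dvd 1 \<Longrightarrow> val p u = 0"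
  using val_unit_times_power[of u 0] by simp

lemma val_power: "a \<noteq> 0 \<Longrightarrow> val p (a ^ k) = k * val p a"
  by (induction k) (auto simp: val_mult val_unit)

lemma val_prod:
  "(\<And>x. x \<in> A \<Longrightarrow> F x \<noteq> 0) \<Longrightarrow> val p (\<Prod>x\<in>A. F x) = (\<Sum>x\<in>A. val p (F x))"
  by (induction A rule: infinite_finite_induct) (auto simp: val_mult val_unit)

lemma not_dvd_imp_unit: "\<not> p dvd c \<Longrightarrow> c dvd 1"
  by (metis dvd_0_right unit_times_uniformizer_power dvd_mult
      mult.right_neutral power_0 dvd_power not_gr0)

lemma prime_elem_uniformizer: "prime_elem p"
proof (rule prime_elemI)
  fix a b assume "p dvd a * b"
  then show "p dvd a \<or> p dvd b"
    using not_dvd_imp_unit uniformizer_not_dvd_unit is_unit_mult by blast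
qed (use uniformizer_nonzero uniformizer_not_unit in auto)

lemma infinite_UNIV: "infinite (UNIV :: 'a set)"
proof -
  have "inj (\<lambda>k::nat. p ^ k)"
    by (rule injI) (metis mult_1 one_dvd val_unit_times_power)
  then show ?thesis
    using finite_subset[OF subset_UNIV] by (metis finite_imageD infinite_UNIV_nat)
qed

definition p_primitive :: "'a poly \<Rightarrow> bool" where
  "p_primitive g \<longleftrightarrow> (\<exists>i. \<not> p dvd coeff g i)"

lemma p_primitive_nonzero: "p_primitive g \<Longrightarrow> g \<noteq> 0"
  unfolding p_primitive_def by auto

lemma primitive_poly_imp_p_primitive: "primitive_poly f \<Longrightarrow> p_primitive f"
proof -
  assume "primitive_poly f"
  then obtain c where c: "(\<Sum>i\<le>degree f. c i * coeff f i) = 1"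
    unfolding primitive_poly_def by blast
  show ?thesis
  proof (rule ccontr)
    assume "\<not> p_primitive f"
    then have "p dvd (\<Sum>i\<le>degree f. c i * coeff f i)"
      unfolding p_primitive_def by (intro dvd_sum) auto
    with c uniformizer_not_unit show False by simp
  qed
qed

lemma smult_uniformizer_if_not_p_primitive:
  assumes "\<not> p_primitive h"
  obtains h' where "h = smult p h'"
proof -
  have "\<forall>i. p dvd coeff h i" using assms unfolding p_primitive_def by blast
  then have "\<exists>h'. h = smult p h'"
  proof (induction h)
    case (pCons a h)
    then obtain h' where "h = smult p h'" by (metis coeff_pCons_Suc)
    moreover obtain a' where "a = p * a'" using pCons(3) by (metis coeff_pCons_0 dvdE)
    ultimately have "pCons a h = smult p (pCons a' h')" by simp
    then show ?case by blast
  qed simp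
  then show ?thesis using that by blast
qed

text \<open>Gauss's lemma: look at the first coefficients of a and b not divisible by p.\<close>
lemma p_primitive_mult:
  assumes a: "p_primitive a" and b: "p_primitive b"
  shows "p_primitive (a * b)"
proof -
  define i where "i = (LEAST i. \<not> p dvd coeff a i)"
  define j where "j = (LEAST j. \<not> p dvd coeff b j)"
  have ai: "\<not> p dvd coeff a i" using a unfolding p_primitive_def i_def by (metis LeastI)
  have bj: "\<not> p dvd coeff b j" using b unfolding p_primitive_def j_def by (metis LeastI)
  have below_i: "p dvd coeff a k" if "k < i" for k using that unfolding i_def by (metis not_less_Least)
  have below_j: "p dvd coeff b k" if "k < j" for k using that unfolding j_def by (metis not_less_Least)
  have "coeff (a * b) (i + j)
      = coeff a i * coeff b j + (\<Sum>k\<in>{..i+j}-{i}. coeff a k * coeff b (i + j - k))"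
    unfolding coeff_mult by (subst sum.remove[of _ i]) auto
  moreover have "p dvd (\<Sum>k\<in>{..i+j}-{i}. coeff a k * coeff b (i + j - k))"
  proof (rule dvd_sum)
    fix k assume "k \<in> {..i+j}-{i}"
    then have "k < i \<or> i + j - k < j" by auto
    then show "p dvd coeff a k * coeff b (i + j - k)" using below_i below_j by auto
  qed
  moreover have "\<not> p dvd coeff a i * coeff b j"
    using prime_elem_dvd_mult_iff[OF prime_elem_uniformizer] ai bj by blast
  ultimately have "\<not> p dvd coeff (a * b) (i + j)" by (simp add: dvd_add_left_iff)
  then show ?thesis unfolding p_primitive_def by blast
qed

lemma p_primitive_1: "p_primitive 1"
  unfolding p_primitive_def using uniformizer_not_unit by (intro exI[of _ 0]) simp

lemma p_primitive_power: "p_primitive a \<Longrightarrow> p_primitive (a ^ k)"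
  by (induction k) (auto simp: p_primitive_1 p_primitive_mult)

lemma p_primitive_prod:
  "(\<And>x. x \<in> A \<Longrightarrow> p_primitive (F x)) \<Longrightarrow> p_primitive (\<Prod>x\<in>A. F x)"
  by (induction A rule: infinite_finite_induct) (auto simp: p_primitive_1 p_primitive_mult)

lemma p_primitive_dvd:
  assumes "p_primitive g" "h dvd g"
  shows "p_primitive h"
proof (rule ccontr)
  assume "\<not> p_primitive h"
  then obtain h' where "h = smult p h'" by (rule smult_uniformizer_if_not_p_primitive)
  moreover obtain q where "g = h * q" using assms(2) by blast
  ultimately have "\<forall>i. p dvd coeff g i" by simp
  with assms(1) show False unfolding p_primitive_def by blast
qed

lemma p_primitive_degree_0:
  assumes "p_primitive g" "degree g = 0"
  shows "\<exists>c. c dvd 1 \<and> g = [:c:]"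
proof -
  obtain i where "\<not> p dvd coeff g i" using assms(1) unfolding p_primitive_def by blast
  then have "\<not> p dvd coeff g 0" using assms(2) by (metis coeff_eq_0 dvd_0_right gr0I)
  then show ?thesis using assms(2) not_dvd_imp_unit by (metis degree_0_id)
qed

lemma p_primitive_decomposition:
  assumes "g \<noteq> 0"
  shows "\<exists>k g'. g = smult (p ^ k) g' \<and> p_primitive g'"
  using assms
proof (induction "val p (lead_coeff g)" arbitrary: g rule: less_induct)
  case less
  show ?case
  proof (cases "p_primitive g")
    case False
    then obtain h where h: "g = smult p h" by (rule smult_uniformizer_if_not_p_primitive)
    with less.prems have "h \<noteq> 0" by auto
    with h have "val p (lead_coeff g) = val p (lead_coeff h) + 1"
      using uniformizer_nonzero val_mult val_unit_times_power[of 1 1] by simp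
    then obtain k g' where "h = smult (p ^ k) g'" "p_primitive g'"
      using less.hyps \<open>h \<noteq> 0\<close> by fastforce
    then show ?thesis using h by (intro exI[of _ "Suc k"]) auto
  qed (rule exI[of _ 0], simp)
qed

section \<open>Polynomials over the fraction field\<close>

abbreviation \<pi> :: "'a fract" where "\<pi> \<equiv> to_fract p"

abbreviation scaled_poly :: "'a \<Rightarrow> int \<Rightarrow> 'a poly \<Rightarrow> 'a fract poly" where
  "scaled_poly u m g \<equiv> smult (to_fract u * \<pi> powi (- m)) (fract_poly g)"

lemma pi_nonzero: "\<pi> \<noteq> 0"
  using uniformizer_nonzero by simp

lemma scaled_poly_factor_nonzero: "u dvd 1 \<Longrightarrow> to_fract u * \<pi> powi m \<noteq> 0"
  using pi_nonzero by (auto simp: power_int_not_zero)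

lemma degree_scaled_poly: "u dvd 1 \<Longrightarrow> degree (scaled_poly u m g) = degree g"
  using scaled_poly_factor_nonzero uniformizer_nonzero by (simp add: degree_map_poly)

lemma fract_unit_times_power_int:
  assumes "x \<noteq> 0"
  shows "\<exists>u e. u dvd 1 \<and> x = to_fract u * \<pi> powi e"
proof -
  obtain a b where ab: "x = to_fract a / to_fract b" "b \<noteq> 0"
    by (cases x) (simp add: Fract_conv_to_fract)
  with assms have "a \<noteq> 0" by auto
  then obtain u i where u: "u dvd 1" "a = u * p ^ i" using unit_times_uniformizer_power by blast
  obtain w j where w: "w dvd 1" "b = w * p ^ j" using unit_times_uniformizer_power ab(2) by blast
  obtain w' where w': "w' dvd 1" "inverse (to_fract w) = to_fract w'"
    using to_fract_unit_inverse[OF w(1)] by blast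
  have "x = to_fract u * inverse (to_fract w) * (\<pi> ^ i / \<pi> ^ j)"
    using ab u w by (simp add: divide_inverse inverse_mult_distrib mult_ac)
  also have "\<dots> = to_fract (u * w') * \<pi> powi (int i - int j)"
    using w' pi_nonzero by (simp add: power_int_diff)
  finally show ?thesis using is_unit_mult[OF u(1) w'(1)] by blast
qed

lemma fract_poly_common_denominator:
  "\<exists>d h. d \<noteq> 0 \<and> G = smult (inverse (to_fract d)) (fract_poly h)"
proof (induction G)
  case 0
  show ?case by (intro exI[of _ 1] exI[of _ 0]) simp
next
  case (pCons c H)
  obtain d h where dh: "d \<noteq> 0" "H = smult (inverse (to_fract d)) (fract_poly h)"
    using pCons by blast
  obtain a b where ab: "c = to_fract a / to_fract b" "b \<noteq> 0"
    by (cases c) (simp add: Fract_conv_to_fract)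
  have "pCons c H = smult (inverse (to_fract (b * d))) (fract_poly (pCons (a * d) (smult b h)))"
    using dh ab by (simp add: map_poly_pCons field_simps)
  moreover have "b * d \<noteq> 0" using dh ab by simp
  ultimately show ?case by blast
qed

lemma scaled_poly_exists:
  assumes "G \<noteq> 0"
  shows "\<exists>u m g. u dvd 1 \<and> p_primitive g \<and> G = scaled_poly u m g"
proof -
  obtain d h where dh: "d \<noteq> 0" "G = smult (inverse (to_fract d)) (fract_poly h)"
    using fract_poly_common_denominator by blast
  with assms have "h \<noteq> 0" by auto
  then obtain k g where kg: "h = smult (p ^ k) g" "p_primitive g"
    using p_primitive_decomposition by blast
  have "inverse (to_fract d) * \<pi> ^ k \<noteq> 0" using dh uniformizer_nonzero by simp
  then obtain u e where ue: "u dvd 1" "inverse (to_fract d) * \<pi> ^ k = to_fract u * \<pi> powi e"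
    using fract_unit_times_power_int by blast
  have "G = scaled_poly u (- e) g" using dh kg ue(2) by simp
  then show ?thesis using ue(1) kg(2) by blast
qed

lemma smult_p_primitive_integral:
  assumes eq: "smult x (fract_poly g) = fract_poly h" and g: "p_primitive g"
  shows "\<exists>r. x = to_fract r \<and> h = smult r g"
proof (cases "x = 0")
  case False
  obtain u e where ue: "u dvd 1" "x = to_fract u * \<pi> powi e"
    using fract_unit_times_power_int[OF False] by blast
  have "e \<ge> 0"
  proof (rule ccontr)
    assume "\<not> e \<ge> 0"
    define k where "k = nat (- e)"
    have k: "k > 0" "e = - int k" using \<open>\<not> e \<ge> 0\<close> unfolding k_def by auto
    have "smult (\<pi> ^ k) (smult x (fract_poly g)) = fract_poly (smult u g)"
      using ue k pi_nonzero by (simp add: power_int_minus field_simps)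
    then have "fract_poly (smult (p ^ k) h) = fract_poly (smult u g)" using eq by simp
    then have "smult u g = smult (p ^ k) h" by (simp only: fract_poly_eq_iff)
    then have "u * coeff g i = p ^ k * coeff h i" for i
      by (metis coeff_smult)
    moreover have "p dvd p ^ k" using k(1) by (simp add: dvd_power)
    ultimately have "p dvd u * coeff g i" for i by (metis dvd_mult2)
    then have "\<forall>i. p dvd coeff g i"
      using prime_elem_dvd_mult_iff[OF prime_elem_uniformizer] uniformizer_not_dvd_unit[OF ue(1)]
      by blast
    with g show False unfolding p_primitive_def by blast
  qed
  then have "x = to_fract (u * p ^ nat e)" using ue by (simp add: power_int_def)
  moreover from this have "fract_poly (smult (u * p ^ nat e) g) = fract_poly h" using eq by simp
  ultimately show ?thesis by (metis fract_poly_eq_iff)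
qed (use assms in \<open>auto intro: exI[of _ 0]\<close>)

lemma unit_times_power_int_inj:
  assumes "to_fract a * \<pi> powi e1 = to_fract b * \<pi> powi e2" "a dvd 1" "b dvd 1"
  shows "e1 = e2"
proof -
  have le: "e1 = e2"
    if eq: "to_fract a * \<pi> powi e1 = to_fract b * \<pi> powi e2" and a: "a dvd 1" and "e1 \<le> e2"
    for a b e1 e2
  proof -
    define k where "k = nat (e2 - e1)"
    have "\<pi> powi e2 = \<pi> ^ k * \<pi> powi e1"
      unfolding k_def using \<open>e1 \<le> e2\<close> pi_nonzero
      by (simp add: power_int_add[symmetric] power_int_def[of _ "nat _"] flip: power_int_of_nat)
    with eq have "to_fract a = to_fract b * \<pi> ^ k"
      using pi_nonzero by (simp add: power_int_not_zero mult.assoc)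
    then have "a = b * p ^ k" by (metis to_fract_eq_iff to_fract_mult to_fract_power)
    have "k = 0"
    proof (rule ccontr)
      assume "k \<noteq> 0"
      then have "p dvd a" using \<open>a = b * p ^ k\<close> by (simp add: dvd_power)
      with a show False using uniformizer_not_dvd_unit by blast
    qed
    then show ?thesis unfolding k_def using \<open>e1 \<le> e2\<close> by simp
  qed
  show ?thesis using le[OF assms(1,2)] le[OF assms(1)[symmetric] assms(3)] by linarith
qed

lemma scaled_poly_unique:
  assumes eq: "scaled_poly u m g = scaled_poly u' m' g'"
    and "p_primitive g" "p_primitive g'" "u dvd 1" "u' dvd 1"
  shows "m = m' \<and> (\<exists>w. w dvd 1 \<and> g' = smult w g)"
proof -
  define c where "c = to_fract u * \<pi> powi (- m)"
  define c' where "c' = to_fract u' * \<pi> powi (- m')"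
  have cnz: "c \<noteq> 0" "c' \<noteq> 0"
    unfolding c_def c'_def using assms(4,5) scaled_poly_factor_nonzero by auto
  have eq': "smult c (fract_poly g) = smult c' (fract_poly g')"
    using eq unfolding c_def c'_def .
  have "smult (c / c') (fract_poly g) = fract_poly g'"
    using arg_cong[OF eq', of "smult (inverse c')"] cnz by (simp add: divide_inverse mult.commute)
  then obtain r where r: "c / c' = to_fract r" "g' = smult r g"
    using smult_p_primitive_integral assms(2) by blast
  have "smult (c' / c) (fract_poly g') = fract_poly g"
    using arg_cong[OF eq', of "smult (inverse c)"] cnz by (simp add: divide_inverse mult.commute)
  then obtain s where s: "c' / c = to_fract s" using smult_p_primitive_integral assms(3) by blast
  have "to_fract (r * s) = 1" using r(1) s cnz by (simp flip: r(1) s)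
  then have r_unit: "r dvd 1" by (metis dvdI to_fract_1 to_fract_eq_iff)
  have "to_fract u * \<pi> powi (-m) = to_fract (r * u') * \<pi> powi (-m')"
    using r(1) cnz unfolding c_def c'_def by (simp add: field_simps)
  from unit_times_power_int_inj[OF this assms(4) is_unit_mult[OF r_unit assms(5)]]
  have "m = m'" by simp
  then show ?thesis using r r_unit by auto
qed

lemma scaled_poly_in_IntR_iff:
  assumes "u dvd 1"
  shows "scaled_poly u m g \<in> IntR \<longleftrightarrow> (\<forall>a. m \<le> 0 \<or> p ^ nat m dvd poly g a)"
proof -
  obtain v where v: "1 = u * v" using assms by (rule dvdE)
  have "to_fract u * \<pi> powi (- m) * to_fract y \<in> range to_fract \<longleftrightarrow> m \<le> 0 \<or> p ^ nat m dvd y" for y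
  proof (cases "m \<le> 0")
    case True
    then have "to_fract u * \<pi> powi (- m) * to_fract y = to_fract (u * p ^ nat (- m) * y)"
      by (simp add: power_int_nonneg_exp)
    then show ?thesis using True by (metis rangeI)
  next
    case False
    then obtain k where m: "m = int k" by (metis nonneg_int_cases not_le order.strict_implies_order)
    have pk: "\<pi> powi (- m) = inverse (\<pi> ^ k)" unfolding m by (simp add: power_int_minus)
    have "to_fract u * \<pi> powi (- m) * to_fract y \<in> range to_fract \<longleftrightarrow> p ^ k dvd y"
    proof
      assume "to_fract u * \<pi> powi (- m) * to_fract y \<in> range to_fract"
      then obtain z where "to_fract u * inverse (\<pi> ^ k) * to_fract y = to_fract z"
        unfolding pk by auto
      then have "to_fract (u * y) = to_fract (z * p ^ k)"
        using pi_nonzero by (simp add: field_simps)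
      then have "u * y = z * p ^ k" by (simp only: to_fract_eq_iff)
      have "y = v * (u * y)" using v by (simp add: mult_ac)
      also have "\<dots> = p ^ k * (v * z)" using \<open>u * y = z * p ^ k\<close> by (simp add: mult_ac)
      finally show "p ^ k dvd y" by simp
    next
      assume "p ^ k dvd y"
      then obtain z where "y = p ^ k * z" by blast
      then have "to_fract u * \<pi> powi (- m) * to_fract y = to_fract (u * z)"
        unfolding pk using pi_nonzero by simp
      then show "to_fract u * \<pi> powi (- m) * to_fract y \<in> range to_fract" by (metis rangeI)
    qed
    then show ?thesis using m False by simp
  qed
  then show ?thesis unfolding IntR_def by (simp add: poly_fract_poly)
qed

text \<open>A chosen representation G = u g/p^m with u a unit and g p-primitive: m is unique, while g is
  determined only up to a unit factor.\<close>
definition normal_form :: "'a fract poly \<Rightarrow> 'a \<times> int \<times> 'a poly" where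
  "normal_form G = (SOME (u, m, g). u dvd 1 \<and> p_primitive g \<and> G = scaled_poly u m g)"

definition nf_unit :: "'a fract poly \<Rightarrow> 'a" where "nf_unit G = fst (normal_form G)"
definition nf_exp :: "'a fract poly \<Rightarrow> int" where "nf_exp G = fst (snd (normal_form G))"
definition nf_poly :: "'a fract poly \<Rightarrow> 'a poly" where "nf_poly G = snd (snd (normal_form G))"

lemma normal_form:
  assumes "G \<noteq> 0"
  shows "nf_unit G dvd 1" "p_primitive (nf_poly G)"
    and "G = scaled_poly (nf_unit G) (nf_exp G) (nf_poly G)"
proof -
  have "(\<lambda>(u, m, g). u dvd 1 \<and> p_primitive g \<and> G = scaled_poly u m g) (normal_form G)"
    unfolding normal_form_def by (rule someI_ex) (use scaled_poly_exists[OF assms] in auto)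
  then show "nf_unit G dvd 1" "p_primitive (nf_poly G)"
    and "G = scaled_poly (nf_unit G) (nf_exp G) (nf_poly G)"
    unfolding nf_unit_def nf_exp_def nf_poly_def by (auto simp: case_prod_beta)
qed

lemma scaled_poly_nonzero: "u dvd 1 \<Longrightarrow> p_primitive g \<Longrightarrow> scaled_poly u m g \<noteq> 0"
  using scaled_poly_factor_nonzero p_primitive_nonzero by simp

lemma normal_form_scaled_poly:
  assumes "u dvd 1" "p_primitive g"
  shows "nf_exp (scaled_poly u m g) = m"
    and "\<exists>w. w dvd 1 \<and> g = smult w (nf_poly (scaled_poly u m g))"
  using scaled_poly_unique[OF normal_form(3)[symmetric] normal_form(2) assms(2) normal_form(1) assms(1)]
    scaled_poly_nonzero[OF assms]
  by auto

lemma scaled_poly_mult: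
  "scaled_poly u m g * scaled_poly u' m' g' = scaled_poly (u * u') (m + m') (g * g')"
proof -
  have "scaled_poly u m g * scaled_poly u' m' g'
      = smult (to_fract (u * u') * (\<pi> powi (- m) * \<pi> powi (- m'))) (fract_poly (g * g'))"
    by (simp add: mult_ac)
  also have "\<pi> powi (- m) * \<pi> powi (- m') = \<pi> powi (- (m + m'))"
    using pi_nonzero by (simp add: power_int_add[symmetric])
  finally show ?thesis .
qed

lemma normal_form_mult:
  assumes "G \<noteq> 0" "H \<noteq> 0"
  shows "nf_exp (G * H) = nf_exp G + nf_exp H"
    and "\<exists>w. w dvd 1 \<and> nf_poly G * nf_poly H = smult w (nf_poly (G * H))"
proof -
  have "G * H
      = scaled_poly (nf_unit G) (nf_exp G) (nf_poly G) * scaled_poly (nf_unit H) (nf_exp H) (nf_poly H)"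
    using normal_form(3)[OF assms(1)] normal_form(3)[OF assms(2)] by (rule arg_cong2)
  also note scaled_poly_mult
  finally have eq:
    "G * H = scaled_poly (nf_unit G * nf_unit H) (nf_exp G + nf_exp H) (nf_poly G * nf_poly H)" .
  have "nf_unit G * nf_unit H dvd 1" "p_primitive (nf_poly G * nf_poly H)"
    using assms by (auto intro!: is_unit_mult p_primitive_mult normal_form)
  note nf = normal_form_scaled_poly[OF this, of "nf_exp G + nf_exp H", folded eq]
  show "nf_exp (G * H) = nf_exp G + nf_exp H" by (rule nf(1))
  show "\<exists>w. w dvd 1 \<and> nf_poly G * nf_poly H = smult w (nf_poly (G * H))" by (rule nf(2))
qed

lemma degree_nf_poly:
  assumes "G \<noteq> 0"
  shows "degree (nf_poly G) = degree G"
proof -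
  have "degree G = degree (scaled_poly (nf_unit G) (nf_exp G) (nf_poly G))"
    using normal_form(3)[OF assms] by (rule arg_cong)
  then show ?thesis using degree_scaled_poly[OF normal_form(1)[OF assms]] by simp
qed

lemma nf_exp_le_val_if_IntR:
  assumes "G \<in> IntR" "G \<noteq> 0" "poly (nf_poly G) b \<noteq> 0"
  shows "nf_exp G \<le> int (val p (poly (nf_poly G) b))"
proof -
  have "scaled_poly (nf_unit G) (nf_exp G) (nf_poly G) \<in> IntR"
    using assms(1) normal_form(3)[OF assms(2)] by (rule back_subst)
  then have "nf_exp G \<le> 0 \<or> p ^ nat (nf_exp G) dvd poly (nf_poly G) b"
    using scaled_poly_in_IntR_iff[OF normal_form(1)[OF assms(2)]] by blast
  then show ?thesis using power_dvd_iff_le_val[OF assms(3)] by auto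
qed

lemma IntR_unit_if_nf_exp_0:
  assumes "G \<noteq> 0" "degree G = 0" "nf_exp G = 0"
  shows "IntR_unit G"
proof -
  obtain c where c: "c dvd 1" "nf_poly G = [:c:]"
    using p_primitive_degree_0[OF normal_form(2)] degree_nf_poly assms by metis
  from normal_form(3)[OF assms(1)] have "G = scaled_poly (nf_unit G) 0 [:c:]"
    unfolding assms(3) c(2) .
  also have "\<dots> = [:to_fract (nf_unit G * c):]" by (simp add: map_poly_pCons)
  finally have "G = [:to_fract (nf_unit G * c):]" .
  then show ?thesis using IntR_unit_iff normal_form(1)[OF assms(1)] c(1) is_unit_mult by blast
qed

lemma irreducible_p_primitive_degree:
  assumes "irreducible q" "p_primitive q"
  shows "degree q \<ge> 1"
proof (rule ccontr)
  assume "\<not> degree q \<ge> 1"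
  then obtain c where "c dvd 1" "q = [:c:]" using p_primitive_degree_0 assms(2) by fastforce
  then show False using assms(1) by (simp add: irreducible_def is_unit_const_poly_iff)
qed

lemma irreducible_fract_poly:
  assumes irr: "irreducible q" and q: "p_primitive q"
  shows "irreducible (fract_poly q)"
proof (rule irreducibleI)
  have "degree (fract_poly q) \<ge> 1"
    using irreducible_p_primitive_degree[OF assms] by (simp add: degree_map_poly)
  then show "fract_poly q \<noteq> 0" "\<not> fract_poly q dvd 1" by (auto simp: is_unit_poly_iff)
next
  fix A B assume AB: "fract_poly q = A * B"
  then have "A \<noteq> 0" "B \<noteq> 0" using p_primitive_nonzero[OF q] by auto
  obtain u m a where a: "u dvd 1" "p_primitive a" "A = scaled_poly u m a"
    using scaled_poly_exists[OF \<open>A \<noteq> 0\<close>] by blast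
  obtain u' m' b where b: "u' dvd 1" "p_primitive b" "B = scaled_poly u' m' b"
    using scaled_poly_exists[OF \<open>B \<noteq> 0\<close>] by blast
  have "scaled_poly (u * u') (m + m') (a * b) = fract_poly q"
    unfolding AB a(3) b(3) scaled_poly_mult ..
  then obtain r where "q = smult r (a * b)"
    using smult_p_primitive_integral p_primitive_mult[OF a(2) b(2)] by blast
  then have r: "q = smult r a * b" by simp
  then have "r \<noteq> 0" using p_primitive_nonzero[OF q] by auto
  have "smult r a dvd 1 \<or> b dvd 1" using irr r by (simp add: irreducible_def)
  then have "degree (smult r a) = 0 \<or> degree b = 0" by (metis degree_pCons_0 is_unit_poly_iff)
  moreover have "degree A = degree a" "degree B = degree b"
    using a b degree_scaled_poly by simp_all
  ultimately show "A dvd 1 \<or> B dvd 1"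
    using \<open>r \<noteq> 0\<close> is_unit_iff_degree[OF \<open>A \<noteq> 0\<close>] is_unit_iff_degree[OF \<open>B \<noteq> 0\<close>] by auto
qed

lemma fract_poly_dvd_imp_dvd:
  assumes q: "p_primitive q" and dvd: "fract_poly q dvd fract_poly a"
  shows "q dvd a"
proof (cases "a = 0")
  case False
  obtain C where C: "fract_poly a = fract_poly q * C" using dvd by blast
  with False have "C \<noteq> 0" by auto
  then obtain u m c where c: "u dvd 1" "p_primitive c" "C = scaled_poly u m c"
    using scaled_poly_exists by metis
  have "smult (to_fract u * \<pi> powi (- m)) (fract_poly (q * c)) = fract_poly a"
    using C c(3) by (simp add: mult_ac)
  then obtain r where "a = smult r (q * c)"
    using smult_p_primitive_integral p_primitive_mult[OF q c(2)] by blast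
  then show ?thesis by (metis dvd_triv_left mult_smult_right)
qed simp

lemma prime_elem_if_irreducible_p_primitive:
  assumes "irreducible q" "p_primitive q"
  shows "prime_elem q"
proof (rule prime_elemI)
  show "q \<noteq> 0" "\<not> q dvd 1" using assms(1) by (auto simp: irreducible_def)
next
  fix a b assume "q dvd a * b"
  then have "fract_poly q dvd fract_poly a * fract_poly b" by (metis fract_poly_dvd fract_poly_mult)
  then have "fract_poly q dvd fract_poly a \<or> fract_poly q dvd fract_poly b"
    using field_poly_irreducible_imp_prime[OF irreducible_fract_poly[OF assms]]
    by (simp add: prime_elem_dvd_mult_iff)
  then show "q dvd a \<or> q dvd b" using fract_poly_dvd_imp_dvd[OF assms(2)] by blast
qed

end

section \<open>Irreducible factors of powers of f\<close>

locale irreducible_divisors = dvr +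
  fixes f :: "'a poly" and P :: "'a poly set"
  assumes p_primitive_f: "p_primitive f"
    and degree_f: "degree f \<ge> 1"
    and irreducible_divisor_set: "irreducible_divisor_set f P"
begin

lemma irreducible_P: "g \<in> P \<Longrightarrow> irreducible g"
  and P_dvd_f: "g \<in> P \<Longrightarrow> g dvd f"
  and assoc_P_if_irreducible_dvd_f: "irreducible q \<Longrightarrow> q dvd f \<Longrightarrow> \<exists>g\<in>P. assoc_poly q g"
  and P_eq_if_assoc: "g \<in> P \<Longrightarrow> h \<in> P \<Longrightarrow> assoc_poly g h \<Longrightarrow> g = h"
  using irreducible_divisor_set unfolding irreducible_divisor_set_def by blast+

lemma p_primitive_if_dvd_f_power: "h dvd f ^ k \<Longrightarrow> p_primitive h"
  using p_primitive_dvd p_primitive_power p_primitive_f by blast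

lemma unit_if_degree_0_dvd_f_power: "h dvd f ^ k \<Longrightarrow> degree h = 0 \<Longrightarrow> h dvd 1"
  using p_primitive_degree_0 p_primitive_if_dvd_f_power is_unit_const_poly_iff by metis

lemma p_primitive_P: "g \<in> P \<Longrightarrow> p_primitive g"
  using P_dvd_f p_primitive_dvd p_primitive_f by blast

lemma prime_elem_P: "g \<in> P \<Longrightarrow> prime_elem g"
  using prime_elem_if_irreducible_p_primitive irreducible_P p_primitive_P by blast

lemma P_nonzero: "g \<in> P \<Longrightarrow> g \<noteq> 0"
  using prime_elem_P prime_elem_not_zeroI by blast

lemma degree_P: "g \<in> P \<Longrightarrow> degree g \<ge> 1"
  using irreducible_p_primitive_degree irreducible_P p_primitive_P by blast

lemma P_eq_if_dvd:
  assumes "g \<in> P" "h \<in> P" "g dvd h"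
  shows "g = h"
proof -
  obtain a where "h = g * a" using assms(3) by blast
  then have "a dvd 1"
    using irreducible_P[OF assms(2)] prime_elem_not_unit[OF prime_elem_P[OF assms(1)]]
    by (auto simp: irreducible_def)
  then have "h dvd g" using \<open>h = g * a\<close> by (metis dvdE dvd_triv_left mult.assoc mult_1_right)
  then show ?thesis using P_eq_if_assoc assms unfolding assoc_poly_def by blast
qed

lemma prod_subset_P_dvd_f: "finite S \<Longrightarrow> S \<subseteq> P \<Longrightarrow> (\<Prod>g\<in>S. g) dvd f"
proof (induction S rule: finite_induct)
  case (insert g S)
  then obtain c where c: "f = (\<Prod>h\<in>S. h) * c" by auto
  have "\<not> g dvd (\<Prod>h\<in>S. h)"
    using prime_elem_dvd_prod[OF prime_elem_P] P_eq_if_dvd insert by blast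
  then have "g dvd c" using P_dvd_f prime_elem_P insert(4) c by (auto simp: prime_elem_dvd_mult_iff)
  then show ?case using c insert(1,2) by (auto simp: mult.commute intro: mult_dvd_mono)
qed simp

lemma finite_P: "finite P"
proof (rule ccontr)
  assume "infinite P"
  then obtain S where S: "S \<subseteq> P" "finite S" "card S = degree f + 1"
    using infinite_arbitrarily_large by metis
  have "degree (\<Prod>g\<in>S. g) \<le> degree f"
    using prod_subset_P_dvd_f[OF S(2,1)] p_primitive_nonzero[OF p_primitive_f] by (rule dvd_imp_degree_le)
  moreover have "degree (\<Prod>g\<in>S. g) = (\<Sum>g\<in>S. degree g)"
    using S P_nonzero by (subst degree_prod_eq_sum_degree) auto
  moreover have "(\<Sum>g\<in>S. degree g) \<ge> card S" using S degree_P
    by (metis card_eq_sum subsetD sum_mono)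
  ultimately show False using S by simp
qed

lemma P_not_dvd_prod_others:
  assumes "g \<in> P"
  shows "\<not> g dvd (\<Prod>h\<in>P - {g}. h ^ e h)"
proof
  assume "g dvd (\<Prod>h\<in>P - {g}. h ^ e h)"
  then obtain h where "h \<in> P - {g}" "g dvd h ^ e h"
    using prime_elem_dvd_prod[OF prime_elem_P[OF assms]] finite_P by blast
  then show False
    using prime_elem_dvd_power[OF prime_elem_P[OF assms]] P_eq_if_dvd[OF assms] by blast
qed

lemma power_dvd_factorization_iff:
  assumes "g \<in> P" "w dvd 1"
  shows "g ^ j dvd smult w (\<Prod>h\<in>P. h ^ e h) \<longleftrightarrow> j \<le> e g"
proof -
  define R where "R = (\<Prod>h\<in>P - {g}. h ^ e h)"
  have split: "smult w (\<Prod>h\<in>P. h ^ e h) = g ^ e g * smult w R"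
    unfolding R_def using assms(1) finite_P by (simp add: prod.remove)
  show ?thesis
  proof
    assume "g ^ j dvd smult w (\<Prod>h\<in>P. h ^ e h)"
    show "j \<le> e g"
    proof (rule ccontr)
      assume "\<not> j \<le> e g"
      then have "g ^ e g * g dvd g ^ j" by (metis le_imp_power_dvd not_less_eq_eq power_Suc2)
      then have "g ^ e g * g dvd g ^ e g * smult w R"
        using \<open>g ^ j dvd _\<close> split by (metis dvd_trans)
      then have "g dvd R" using P_nonzero[OF assms(1)] dvd_smult_unit_iff[OF assms(2)] by simp
      then show False using P_not_dvd_prod_others[OF assms(1)] unfolding R_def by blast
    qed
  next
    assume "j \<le> e g"
    then show "g ^ j dvd smult w (\<Prod>h\<in>P. h ^ e h)"
      unfolding split by (rule dvd_mult2[OF le_imp_power_dvd])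
  qed
qed

lemma factorization_unique:
  assumes "smult w (\<Prod>g\<in>P. g ^ e g) = smult w' (\<Prod>g\<in>P. g ^ e' g)" "w dvd 1" "w' dvd 1" "g \<in> P"
  shows "e g = e' g"
proof -
  have "j \<le> e g \<longleftrightarrow> j \<le> e' g" for j
    using power_dvd_factorization_iff[OF assms(4,2), of j e]
      power_dvd_factorization_iff[OF assms(4,3), of j e'] unfolding assms(1) by blast
  then show ?thesis by (meson le_antisym order_refl)
qed

lemma exists_irreducible_divisor:
  assumes "h dvd f ^ k" "degree h \<ge> 1"
  shows "\<exists>q. irreducible q \<and> q dvd h"
proof -
  define D where "D = {q. q dvd h \<and> degree q \<ge> 1}"
  obtain q where q: "q \<in> D" and least: "\<And>d. d \<in> D \<Longrightarrow> degree q \<le> degree d"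
    using ex_has_least_nat[of "\<lambda>d. d \<in> D" h degree] assms(2) unfolding D_def by auto
  have "q \<noteq> 0" "\<not> q dvd 1" using q unfolding D_def by (auto simp: is_unit_poly_iff)
  have "irreducible q"
  proof (rule irreducibleI)
    show "q \<noteq> 0" "\<not> q dvd 1" by fact+
  next
    fix a b assume ab: "q = a * b"
    with \<open>q \<noteq> 0\<close> have "degree q = degree a + degree b" by (simp add: degree_mult_eq)
    moreover have "a dvd h" "b dvd h" using q ab unfolding D_def by (auto intro: dvd_trans)
    moreover note least[of a] least[of b]
    ultimately have "degree a = 0 \<or> degree b = 0" unfolding D_def by fastforce
    then show "a dvd 1 \<or> b dvd 1"
      using \<open>a dvd h\<close> \<open>b dvd h\<close> assms(1) unit_if_degree_0_dvd_f_power dvd_trans by metis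
  qed
  then show ?thesis using q unfolding D_def by blast
qed

lemma factorization_exists:
  assumes "h dvd f ^ k"
  shows "\<exists>w e. w dvd 1 \<and> h = smult w (\<Prod>g\<in>P. g ^ e g)"
  using assms
proof (induction "degree h" arbitrary: h rule: less_induct)
  case less
  show ?case
  proof (cases "degree h = 0")
    case True
    then obtain c where "c dvd 1" "h = [:c:]"
      using unit_if_degree_0_dvd_f_power[OF less.prems] by (auto simp: is_unit_poly_iff)
    then show ?thesis by (intro exI[of _ c] exI[of _ "\<lambda>_. 0"]) simp
  next
    case False
    then obtain q where q: "irreducible q" "q dvd h"
      using exists_irreducible_divisor less.prems by fastforce
    have "q dvd f"
      using prime_elem_dvd_power q less.prems
        prime_elem_if_irreducible_p_primitive[OF q(1) p_primitive_if_dvd_f_power]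
      by (meson dvd_trans)
    then obtain g where g: "g \<in> P" "g dvd q"
      using assoc_P_if_irreducible_dvd_f q(1) unfolding assoc_poly_def by blast
    then obtain h' where h': "h = g * h'" using q(2) by (meson dvd_trans dvdE)
    have "h \<noteq> 0" using False by auto
    with h' have "degree h = degree g + degree h'" by (simp add: degree_mult_eq)
    then have "degree h' < degree h" using degree_P[OF g(1)] by simp
    moreover have "h' dvd f ^ k" using h' less.prems by (metis dvd_mult_right)
    ultimately obtain w e where we: "w dvd 1" "h' = smult w (\<Prod>g\<in>P. g ^ e g)"
      using less.hyps by blast
    have "(\<Prod>x\<in>P. x ^ (e(g := e g + 1)) x) = g * (\<Prod>x\<in>P. x ^ e x)"
      using g(1) finite_P by (simp add: prod.remove mult_ac)
    then have "h = smult w (\<Prod>x\<in>P. x ^ (e(g := e g + 1)) x)" using h' we(2) by simp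
    then show ?thesis using we(1) by blast
  qed
qed

end

section \<open>The element F = f/p^n of Int(R)\<close>

locale image_primitive_quotient = irreducible_divisors +
  assumes vd_positive: "vd p f \<ge> 1"
begin

abbreviation n :: nat where "n \<equiv> vd p f"
abbreviation W :: "'a set" where "W \<equiv> W_set p f"

definition F :: "'a fract poly" where
  "F = smult (inverse (\<pi> ^ n)) (fract_poly f)"

lemma F_power: "F ^ k = scaled_poly 1 (int (k * n)) (f ^ k)"
proof (induction k)
  case (Suc k)
  have "F = scaled_poly 1 (int n) f" unfolding F_def by (simp add: power_int_minus)
  then have "F ^ Suc k = scaled_poly 1 (int n) f * scaled_poly 1 (int (k * n)) (f ^ k)"
    using Suc.IH by simp
  then show ?case unfolding scaled_poly_mult by (simp add: algebra_simps)
qed simp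

lemma F_nonzero: "F \<noteq> 0"
  unfolding F_def using p_primitive_nonzero[OF p_primitive_f] pi_nonzero by simp

lemma degree_F_power: "degree (F ^ k) = k * degree f"
  unfolding F_power degree_scaled_poly[OF one_dvd]
  by (simp add: degree_power_eq p_primitive_nonzero[OF p_primitive_f])

lemma n_le_val: "poly f a \<noteq> 0 \<Longrightarrow> n \<le> val p (poly f a)"
  unfolding vd_def by (rule Least_le) blast

lemma W_nonempty: "W \<noteq> {}"
proof -
  have "\<exists>a. poly f a \<noteq> 0"
  proof (rule ccontr)
    assume "\<not> (\<exists>a. poly f a \<noteq> 0)"
    then have "{a. poly f a = 0} = UNIV" by auto
    then show False
      using poly_roots_finite[OF p_primitive_nonzero[OF p_primitive_f]] infinite_UNIV by simp
  qed
  then have "\<exists>k a. poly f a \<noteq> 0 \<and> val p (poly f a) = k" by blast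
  then have "\<exists>a. poly f a \<noteq> 0 \<and> val p (poly f a) = n"
    unfolding vd_def by (rule LeastI_ex)
  then show ?thesis unfolding W_set_def by blast
qed

lemma W_nonroot: "b \<in> W \<Longrightarrow> poly f b \<noteq> 0"
  and W_val: "b \<in> W \<Longrightarrow> val p (poly f b) = n"
  unfolding W_set_def by auto

lemma F_in_IntR: "F \<in> IntR"
proof -
  have "p ^ n dvd poly f a" for a
  proof (cases "poly f a = 0")
    case False
    then show ?thesis using n_le_val power_dvd_iff_le_val by blast
  qed simp
  moreover have "F = scaled_poly 1 (int n) f" using F_power[of 1] by simp
  ultimately show ?thesis using scaled_poly_in_IntR_iff[OF one_dvd] by simp
qed

definition f_unit :: 'a where
  "f_unit = (SOME w. \<exists>e. w dvd 1 \<and> f = smult w (\<Prod>g\<in>P. g ^ e g) \<and> (\<forall>g\<in>P. e g \<ge> 1))"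

definition f_exp :: "'a poly \<Rightarrow> nat" where
  "f_exp = (SOME e. f_unit dvd 1 \<and> f = smult f_unit (\<Prod>g\<in>P. g ^ e g) \<and> (\<forall>g\<in>P. e g \<ge> 1))"

lemma f_factorization:
  "f_unit dvd 1" "f = smult f_unit (\<Prod>g\<in>P. g ^ f_exp g)" "g \<in> P \<Longrightarrow> f_exp g \<ge> 1"
proof -
  obtain w e where we: "w dvd 1" "f = smult w (\<Prod>g\<in>P. g ^ e g)"
    using factorization_exists[of f 1] by auto
  have "e g \<ge> 1" if "g \<in> P" for g
    using power_dvd_factorization_iff[OF that we(1), of 1 e] P_dvd_f[OF that] we(2) by simp
  with we have "\<exists>w e. w dvd 1 \<and> f = smult w (\<Prod>g\<in>P. g ^ e g) \<and> (\<forall>g\<in>P. e g \<ge> 1)"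
    by blast
  then have "\<exists>e. f_unit dvd 1 \<and> f = smult f_unit (\<Prod>g\<in>P. g ^ e g) \<and> (\<forall>g\<in>P. e g \<ge> 1)"
    unfolding f_unit_def by (rule someI_ex)
  then have "f_unit dvd 1 \<and> f = smult f_unit (\<Prod>g\<in>P. g ^ f_exp g) \<and> (\<forall>g\<in>P. f_exp g \<ge> 1)"
    unfolding f_exp_def by (rule someI_ex)
  then show "f_unit dvd 1" "f = smult f_unit (\<Prod>g\<in>P. g ^ f_exp g)" "g \<in> P \<Longrightarrow> f_exp g \<ge> 1"
    by auto
qed

lemma f_power_factorization: "f ^ k = smult (f_unit ^ k) (\<Prod>g\<in>P. g ^ (f_exp g * k))"
  using arg_cong[OF f_factorization(2), of "\<lambda>x. x ^ k"]
  by (simp add: smult_power prod_power_distrib power_mult)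

lemma val_factorization:
  assumes "w dvd 1" "poly f b \<noteq> 0"
  shows "val p (poly (smult w (\<Prod>g\<in>P. g ^ e g)) b) = (\<Sum>g\<in>P. e g * val p (poly g b))"
proof -
  have nonroot: "poly g b \<noteq> 0" if "g \<in> P" for g
    using P_dvd_f[OF that] assms(2) by (metis dvdE mult_eq_0_iff poly_mult)
  then have "(\<Prod>g\<in>P. poly g b ^ e g) \<noteq> 0" using finite_P by simp
  moreover have "poly (smult w (\<Prod>g\<in>P. g ^ e g)) b = w * (\<Prod>g\<in>P. poly g b ^ e g)"
    by (simp add: poly_prod)
  moreover have "w \<noteq> 0" using assms(1) by auto
  ultimately show ?thesis
    using assms(1) nonroot by (simp add: val_mult val_unit val_prod val_power del: poly_smult)
qed

lemma val_f: "poly f b \<noteq> 0 \<Longrightarrow> val p (poly f b) = (\<Sum>g\<in>P. f_exp g * val p (poly g b))"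
  using val_factorization[OF f_factorization(1), of b f_exp, folded f_factorization(2)] .

lemma degree_smult_F_power: "v dvd 1 \<Longrightarrow> degree (smult (to_fract v) (F ^ t)) = t * degree f"
  by (auto simp: degree_F_power)

lemma IntR_unit_smult_F_power_0: "v dvd 1 \<Longrightarrow> IntR_unit (smult (to_fract v) (F ^ 0))"
  unfolding IntR_unit_iff by (auto simp: one_pCons)

lemma not_IntR_unit_F_power: "t \<ge> 1 \<Longrightarrow> v dvd 1 \<Longrightarrow> \<not> IntR_unit (smult (to_fract v) (F ^ t))"
proof -
  assume "t \<ge> 1" "v dvd 1"
  then have "1 \<le> t * degree f" using degree_f by (metis mult_le_mono nat_mult_1)
  then show ?thesis by (metis not_IntR_unit_if_degree degree_smult_F_power[OF \<open>v dvd 1\<close>])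
qed

lemma prod_list_assoc_F:
  assumes "\<forall>q\<in>set qs. IntR_assoc q F"
  shows "\<exists>V. V dvd 1 \<and> prod_list qs = smult (to_fract V) (F ^ length qs)"
  using assms
proof (induction qs)
  case (Cons q qs)
  then obtain V where V: "V dvd 1" "prod_list qs = smult (to_fract V) (F ^ length qs)" by auto
  obtain v where v: "v dvd 1" "q = [:to_fract v:] * F"
    using Cons.prems unfolding IntR_assoc_def IntR_unit_iff by auto
  have "prod_list (q # qs) = smult (to_fract (v * V)) (F ^ length (q # qs))"
    using V(2) v(2) by (simp add: mult_ac)
  then show ?case using is_unit_mult[OF v(1) V(1)] by blast
qed (intro exI[of _ 1]; simp)

lemma normal_form_factors_of_F_power:
  assumes GH: "G * H = F ^ k"
  shows "nf_exp G + nf_exp H = int (k * n)"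
    and "\<exists>v. v dvd 1 \<and> nf_poly G * nf_poly H = smult v (f ^ k)"
proof -
  have "G \<noteq> 0" "H \<noteq> 0" using GH F_nonzero by auto
  have prim: "p_primitive (f ^ k)" using p_primitive_power[OF p_primitive_f] .
  show "nf_exp G + nf_exp H = int (k * n)"
    using normal_form_mult(1)[OF \<open>G \<noteq> 0\<close> \<open>H \<noteq> 0\<close>] normal_form_scaled_poly(1)[OF one_dvd prim]
    unfolding GH F_power by simp
  obtain w where w: "w dvd 1" "nf_poly G * nf_poly H = smult w (nf_poly (G * H))"
    using normal_form_mult[OF \<open>G \<noteq> 0\<close> \<open>H \<noteq> 0\<close>] by blast
  obtain w' where "w' dvd 1" "f ^ k = smult w' (nf_poly (G * H))"
    using normal_form_scaled_poly(2)[OF one_dvd prim] unfolding GH F_power by blast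
  then obtain v where v: "v dvd 1" "nf_poly (G * H) = smult v (f ^ k)"
    using smult_unit_sym by blast
  show "\<exists>v. v dvd 1 \<and> nf_poly G * nf_poly H = smult v (f ^ k)"
    using w v is_unit_mult[OF w(1) v(1)] by (intro exI[of _ "w * v"]) simp
qed

text \<open>The exponents add up to kn; so do the valuations at any b \<in> W, and each exponent is bounded
  by the corresponding valuation because the factors lie in Int(R).\<close>
lemma divisor_of_F_power:
  assumes G: "G \<in> IntR" and H: "H \<in> IntR" and GH: "G * H = F ^ k"
  shows "nf_poly G dvd f ^ k"
    and "b \<in> W \<Longrightarrow> poly (nf_poly G) b \<noteq> 0 \<and> nf_exp G = int (val p (poly (nf_poly G) b))"
proof -
  have "G \<noteq> 0" "H \<noteq> 0" using GH F_nonzero by auto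
  obtain v where v: "v dvd 1" "nf_poly G * nf_poly H = smult v (f ^ k)"
    using normal_form_factors_of_F_power(2)[OF GH] by blast
  then obtain u where "u dvd 1" "f ^ k = smult u (nf_poly G * nf_poly H)"
    using smult_unit_sym by blast
  then show "nf_poly G dvd f ^ k" by (simp add: dvd_smult)
  assume b: "b \<in> W"
  have prod: "poly (nf_poly G) b * poly (nf_poly H) b = v * poly f b ^ k"
    using arg_cong[OF v(2), of "\<lambda>q. poly q b"] by (simp add: poly_power)
  moreover have "v \<noteq> 0" using v(1) by auto
  ultimately have nonroots: "poly (nf_poly G) b \<noteq> 0" "poly (nf_poly H) b \<noteq> 0"
    using W_nonroot[OF b] by auto
  have "val p (poly (nf_poly G) b) + val p (poly (nf_poly H) b) = val p (v * poly f b ^ k)"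
    using val_mult[OF nonroots] prod by simp
  also have "\<dots> = k * n"
    using \<open>v \<noteq> 0\<close> v(1) W_nonroot[OF b] W_val[OF b] by (simp add: val_mult val_unit val_power)
  finally have "val p (poly (nf_poly G) b) + val p (poly (nf_poly H) b) = k * n" .
  moreover note nonroots normal_form_factors_of_F_power(1)[OF GH]
  moreover have "nf_exp G \<le> int (val p (poly (nf_poly G) b))"
    using nf_exp_le_val_if_IntR[OF G \<open>G \<noteq> 0\<close> nonroots(1)] .
  moreover have "nf_exp H \<le> int (val p (poly (nf_poly H) b))"
    using nf_exp_le_val_if_IntR[OF H \<open>H \<noteq> 0\<close> nonroots(2)] .
  ultimately show "poly (nf_poly G) b \<noteq> 0 \<and> nf_exp G = int (val p (poly (nf_poly G) b))"
    by linarith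
qed

lemma nf_exp_divisor_of_F_power_nonneg:
  "G \<in> IntR \<Longrightarrow> H \<in> IntR \<Longrightarrow> G * H = F ^ k \<Longrightarrow> nf_exp G \<ge> 0"
  using divisor_of_F_power(2) W_nonempty by fastforce

text \<open>Induction on degree G + nf_exp G, which is additive, nonnegative on divisors of powers of F,
  and positive on non-units.\<close>
lemma divisor_of_F_power_factors:
  assumes "G \<in> IntR" "H \<in> IntR" "G * H = F ^ k" "\<not> IntR_unit G"
  shows "\<exists>qs. (\<forall>q\<in>set qs. IntR_irreducible q) \<and> prod_list qs = G"
  using assms
proof (induction "degree G + nat (nf_exp G)" arbitrary: G H rule: less_induct)
  case less
  show ?case
  proof (cases "IntR_irreducible G")
    case True
    then show ?thesis by (intro exI[of _ "[G]"]) simp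
  next
    case False
    have "G \<noteq> 0" using less.prems(3) F_nonzero by auto
    then obtain G1 G2 where G12: "G1 \<in> IntR" "G2 \<in> IntR" "G = G1 * G2"
      "\<not> IntR_unit G1" "\<not> IntR_unit G2"
      using False less.prems(1,4) unfolding IntR_irreducible_def by blast
    have "G1 \<noteq> 0" "G2 \<noteq> 0" using \<open>G \<noteq> 0\<close> G12(3) by auto
    have eq1: "G1 * (G2 * H) = F ^ k" and eq2: "G2 * (G1 * H) = F ^ k"
      using G12(3) less.prems(3) by (simp_all add: mult_ac)
    have IntR: "G2 * H \<in> IntR" "G1 * H \<in> IntR" using G12(1,2) less.prems(2) IntR_mult by auto
    have nonneg: "nf_exp G1 \<ge> 0" "nf_exp G2 \<ge> 0"
      using nf_exp_divisor_of_F_power_nonneg G12(1,2) IntR eq1 eq2 by blast+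
    have "degree G1 + nat (nf_exp G1) > 0"
      using IntR_unit_if_nf_exp_0[OF \<open>G1 \<noteq> 0\<close>] G12(4) nonneg(1) by linarith
    moreover have "degree G2 + nat (nf_exp G2) > 0"
      using IntR_unit_if_nf_exp_0[OF \<open>G2 \<noteq> 0\<close>] G12(5) nonneg(2) by linarith
    moreover have "degree G = degree G1 + degree G2"
      using G12(3) \<open>G1 \<noteq> 0\<close> \<open>G2 \<noteq> 0\<close> by (simp add: degree_mult_eq)
    moreover have "nf_exp G = nf_exp G1 + nf_exp G2"
      using G12(3) normal_form_mult(1)[OF \<open>G1 \<noteq> 0\<close> \<open>G2 \<noteq> 0\<close>] by simp
    ultimately have "degree G1 + nat (nf_exp G1) < degree G + nat (nf_exp G)"
      "degree G2 + nat (nf_exp G2) < degree G + nat (nf_exp G)"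
      using nonneg by linarith+
    then obtain qs1 qs2 where
      "\<forall>q\<in>set qs1. IntR_irreducible q" "prod_list qs1 = G1"
      "\<forall>q\<in>set qs2. IntR_irreducible q" "prod_list qs2 = G2"
      using less.hyps[OF _ G12(1) IntR(1) eq1 G12(4)] less.hyps[OF _ G12(2) IntR(2) eq2 G12(5)]
      by blast
    then show ?thesis using G12(3) by (intro exI[of _ "qs1 @ qs2"]) auto
  qed
qed

section \<open>fdk(f) = 0 implies absolute irreducibility\<close>

lemma f_power_if_common_factor:
  assumes "\<forall>g\<in>P. d dvd f_exp g"
  shows "assoc_poly f ((\<Prod>g\<in>P. g ^ (f_exp g div d)) ^ d)"
proof -
  have "(\<Prod>g\<in>P. g ^ (f_exp g div d)) ^ d = (\<Prod>g\<in>P. g ^ (f_exp g div d * d))"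
    by (simp add: prod_power_distrib power_mult)
  also have "\<dots> = (\<Prod>g\<in>P. g ^ f_exp g)"
    using assms by (intro prod.cong) simp_all
  finally have "(\<Prod>g\<in>P. g ^ (f_exp g div d)) ^ d = (\<Prod>g\<in>P. g ^ f_exp g)" .
  then show ?thesis
    using f_factorization(1,2) smult_unit_sym[OF f_factorization(1,2)]
    unfolding assoc_poly_def by (metis dvd_smult dvd_refl)
qed

lemma exponents_proportional_if_fdk_zero:
  assumes fdk: "fdk_zero p f P" and const: "\<forall>b\<in>W. (\<Sum>g\<in>P. e g * val p (poly g b)) = M"
  shows "\<forall>g\<in>P. e g * n = f_exp g * M"
proof -
  define u where "u g = (of_nat (e g * n) - of_nat (f_exp g * M) :: rat)" for g
  have "(\<Sum>g\<in>P. u g * of_nat (val p (poly g b))) = 0" if "b \<in> W" for b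
  proof -
    have "(\<Sum>g\<in>P. u g * of_nat (val p (poly g b))) =
          of_nat n * of_nat (\<Sum>g\<in>P. e g * val p (poly g b))
          - of_nat M * of_nat (\<Sum>g\<in>P. f_exp g * val p (poly g b))"
      unfolding u_def by (simp add: sum_subtractf sum_distrib_left algebra_simps)
    also have "\<dots> = 0"
      using const that val_f[OF W_nonroot[OF that]] W_val[OF that] by simp
    finally show ?thesis .
  qed
  then have "\<forall>g\<in>P. u g = 0" using fdk unfolding fdk_zero_def by blast
  then show ?thesis unfolding u_def by (simp del: of_nat_mult)
qed

lemma divisor_with_constant_val_is_f_power:
  assumes fdk: "fdk_zero p f P" and not_power: "\<not> (\<exists>h k. k \<ge> 2 \<and> assoc_poly f (h ^ k))"
    and dvd: "g dvd f ^ k" and val: "\<forall>b\<in>W. poly g b \<noteq> 0 \<and> m = int (val p (poly g b))"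
  shows "\<exists>t w. w dvd 1 \<and> g = smult w (f ^ t) \<and> m = int (t * n)"
proof -
  obtain w e where we: "w dvd 1" "g = smult w (\<Prod>h\<in>P. h ^ e h)"
    using factorization_exists[OF dvd] by blast
  have "m \<ge> 0" using val W_nonempty by fastforce
  have "\<forall>b\<in>W. (\<Sum>h\<in>P. e h * val p (poly h b)) = nat m"
  proof
    fix b assume b: "b \<in> W"
    have "val p (poly g b) = (\<Sum>h\<in>P. e h * val p (poly h b))"
      using val_factorization[OF we(1) W_nonroot[OF b], of e] we(2) by simp
    moreover have "m = int (val p (poly g b))" using val b by blast
    ultimately show "(\<Sum>h\<in>P. e h * val p (poly h b)) = nat m" by (metis nat_int)
  qed
  then have proportional: "\<forall>h\<in>P. e h * n = f_exp h * nat m"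
    using exponents_proportional_if_fdk_zero[OF fdk] by blast
  have "n dvd nat m"
    using common_factor_if_not_dvd[OF vd_positive proportional] f_power_if_common_factor not_power by blast
  then obtain t where t: "nat m = n * t" by blast
  with proportional vd_positive have "\<forall>h\<in>P. e h = f_exp h * t" by (simp add: mult.commute)
  then have "(\<Prod>h\<in>P. h ^ e h) = (\<Prod>h\<in>P. h ^ f_exp h) ^ t"
    by (simp add: power_mult prod_power_distrib)
  moreover obtain w' where "w' dvd 1" "(\<Prod>h\<in>P. h ^ f_exp h) = smult w' f"
    using smult_unit_sym[OF f_factorization(1,2)] by blast
  ultimately have "g = smult (w * w' ^ t) (f ^ t)" using we(2) by (simp add: smult_power)
  moreover have "w * w' ^ t dvd 1" using we(1) \<open>w' dvd 1\<close> by (simp add: is_unit_mult is_unit_power)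
  moreover have "m = int (t * n)"
    using arg_cong[OF t, of int] \<open>m \<ge> 0\<close> by (simp add: mult.commute)
  ultimately show ?thesis by blast
qed

lemma IntR_divisor_of_F_power_is_power:
  assumes fdk: "fdk_zero p f P" and not_power: "\<not> (\<exists>h k. k \<ge> 2 \<and> assoc_poly f (h ^ k))"
    and "G \<in> IntR" "H \<in> IntR" "G * H = F ^ k"
  shows "\<exists>t v. v dvd 1 \<and> G = smult (to_fract v) (F ^ t)"
proof -
  have "G \<noteq> 0" using assms(5) F_nonzero by auto
  have "\<forall>b\<in>W. poly (nf_poly G) b \<noteq> 0 \<and> nf_exp G = int (val p (poly (nf_poly G) b))"
    using divisor_of_F_power(2)[OF assms(3-5)] by blast
  then obtain t w where tw: "w dvd 1" "nf_poly G = smult w (f ^ t)" "nf_exp G = int (t * n)"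
    using divisor_with_constant_val_is_f_power[OF fdk not_power divisor_of_F_power(1)[OF assms(3-5)]]
    by blast
  have "G = scaled_poly (nf_unit G) (int (t * n)) (smult w (f ^ t))"
    using normal_form(3)[OF \<open>G \<noteq> 0\<close>] unfolding tw(2,3) .
  also have "\<dots> = smult (to_fract (nf_unit G * w)) (F ^ t)"
    unfolding F_power by (simp add: mult_ac)
  finally show ?thesis using is_unit_mult[OF normal_form(1)[OF \<open>G \<noteq> 0\<close>] tw(1)] by blast
qed

lemma IntR_irreducible_F_factor_assoc:
  assumes fdk: "fdk_zero p f P" and not_power: "\<not> (\<exists>h k. k \<ge> 2 \<and> assoc_poly f (h ^ k))"
    and irr: "IntR_irreducible q" and "H \<in> IntR" "q * H = F ^ k"
  shows "IntR_assoc q F"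
proof -
  obtain t v where tv: "v dvd 1" "q = smult (to_fract v) (F ^ t)"
    using IntR_divisor_of_F_power_is_power[OF fdk not_power _ assms(4,5)] irr
    unfolding IntR_irreducible_def by blast
  have "t \<noteq> 0"
  proof
    assume "t = 0"
    then have "IntR_unit q" using IntR_unit_smult_F_power_0[OF tv(1)] tv(2) by simp
    then show False using irr unfolding IntR_irreducible_def by blast
  qed
  moreover have "\<not> t \<ge> 2"
  proof
    assume "t \<ge> 2"
    then obtain t' where "t = Suc t'" by (cases t) auto
    then have "q = smult (to_fract v) (F ^ 1) * F ^ (t - 1)"
      using tv(2) by simp
    moreover have "smult (to_fract v) (F ^ 1) \<in> IntR" "F ^ (t - 1) \<in> IntR"
      using IntR_smult IntR_power F_in_IntR by simp_all
    ultimately have "IntR_unit (smult (to_fract v) (F ^ 1)) \<or> IntR_unit (F ^ (t - 1))"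
      using irr unfolding IntR_irreducible_def by blast
    then show False
      using not_IntR_unit_F_power[OF _ tv(1), of 1] not_IntR_unit_F_power[OF _ one_dvd, of "t - 1"]
        \<open>t \<ge> 2\<close> by simp
  qed
  ultimately have "t = 1" by linarith
  then have "q = [:to_fract v:] * F" using tv(2) by simp
  then show ?thesis unfolding IntR_assoc_def IntR_unit_iff using tv(1) by blast
qed

lemma IntR_irreducible_F_if_fdk_zero:
  assumes fdk: "fdk_zero p f P" and not_power: "\<not> (\<exists>h k. k \<ge> 2 \<and> assoc_poly f (h ^ k))"
  shows "IntR_irreducible F"
  unfolding IntR_irreducible_def
proof (intro conjI ballI impI)
  show "F \<in> IntR" by (rule F_in_IntR)
  show "F \<noteq> 0" by (rule F_nonzero)
  show "\<not> IntR_unit F" using not_IntR_unit_F_power[of 1 1] by simp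
next
  fix G H assume G: "G \<in> IntR" and H: "H \<in> IntR" and GH: "F = G * H"
  have GH1: "G * H = F ^ 1" and HG1: "H * G = F ^ 1" using GH by (simp_all add: mult.commute)
  obtain s v where sv: "v dvd 1" "G = smult (to_fract v) (F ^ s)"
    using IntR_divisor_of_F_power_is_power[OF fdk not_power G H GH1] by blast
  obtain t w where tw: "w dvd 1" "H = smult (to_fract w) (F ^ t)"
    using IntR_divisor_of_F_power_is_power[OF fdk not_power H G HG1] by blast
  have "degree (F ^ 1) = degree G + degree H"
    using GH1 F_nonzero by (metis degree_mult_eq mult_zero_left mult_zero_right power_one_right)
  then have "1 * degree f = s * degree f + t * degree f"
    unfolding degree_F_power sv(2) tw(2) degree_smult_F_power[OF sv(1)] degree_smult_F_power[OF tw(1)] .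
  then have "s + t = 1" using degree_f by (simp add: add_mult_distrib[symmetric])
  then have "s = 0 \<or> t = 0" by linarith
  then show "IntR_unit G \<or> IntR_unit H"
    using sv tw IntR_unit_smult_F_power_0 by auto
qed

lemma abs_irreducible_if_fdk_zero:
  assumes fdk: "fdk_zero p f P" and not_power: "\<not> (\<exists>h k. k \<ge> 2 \<and> assoc_poly f (h ^ k))"
  shows "IntR_abs_irreducible F"
proof -
  note IntR_irreducible_F_if_fdk_zero[OF fdk not_power]
  moreover have "length qs = k \<and> (\<forall>q\<in>set qs. IntR_assoc q F)"
    if irr: "\<forall>q\<in>set qs. IntR_irreducible q" and prod: "prod_list qs = F ^ k" for k qs
  proof -
    have assoc: "\<forall>q\<in>set qs. IntR_assoc q F"
    proof
      fix q assume q: "q \<in> set qs"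
      have "prod_list (remove1 q qs) \<in> IntR"
      proof (rule IntR_prod_list)
        fix q' assume "q' \<in> set (remove1 q qs)"
        then have "q' \<in> set qs" by (rule subsetD[OF set_remove1_subset])
        then show "q' \<in> IntR" using irr unfolding IntR_irreducible_def by blast
      qed
      moreover have "q * prod_list (remove1 q qs) = F ^ k"
        using prod prod_list_remove1[OF q] by simp
      moreover have "IntR_irreducible q" using irr q by blast
      ultimately show "IntR_assoc q F"
        using IntR_irreducible_F_factor_assoc[OF fdk not_power] by blast
    qed
    then obtain V where "V dvd 1" "prod_list qs = smult (to_fract V) (F ^ length qs)"
      using prod_list_assoc_F by blast
    then have "degree (F ^ k) = length qs * degree f"
      using prod degree_smult_F_power by simp
    then have "k * degree f = length qs * degree f" by (simp only: degree_F_power)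
    then show ?thesis using assoc degree_f by simp
  qed
  ultimately show ?thesis unfolding IntR_abs_irreducible_def by blast
qed

section \<open>Absolute irreducibility implies fdk(f) = 0\<close>

lemma integer_witness_if_not_fdk_zero:
  assumes "\<not> fdk_zero p f P"
  obtains z :: "'a poly \<Rightarrow> int" and g0
  where "\<forall>b\<in>W. (\<Sum>g\<in>P. z g * int (val p (poly g b))) = 0" "g0 \<in> P" "z g0 \<noteq> 0"
proof -
  obtain u :: "'a poly \<Rightarrow> rat" and g0 where
    orth: "\<forall>b\<in>W. (\<Sum>g\<in>P. u g * of_nat (val p (poly g b))) = 0" and g0: "g0 \<in> P" "u g0 \<noteq> 0"
    using assms unfolding fdk_zero_def by blast
  obtain D z where Dz: "D > 0" "\<forall>g\<in>P. of_int (z g) = u g * of_int D"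
    using rat_vector_common_denominator[OF finite_P] by blast
  have "(\<Sum>g\<in>P. z g * int (val p (poly g b))) = 0" if "b \<in> W" for b
  proof -
    have "(of_int (\<Sum>g\<in>P. z g * int (val p (poly g b))) :: rat)
        = of_int D * (\<Sum>g\<in>P. u g * of_nat (val p (poly g b)))"
      using Dz(2) by (simp add: sum_distrib_left mult_ac)
    also have "\<dots> = 0" using orth that by simp
    finally show ?thesis by (simp only: of_int_eq_0_iff)
  qed
  moreover have "z g0 \<noteq> 0" using Dz g0 by auto
  ultimately show ?thesis using that g0(1) by blast
qed

text \<open>F^N with the exponent N a_g of each irreducible factor g of f shifted to N a_g + z_g,
  where f = u \<Prod>g. g^(a_g).\<close>
definition shifted :: "nat \<Rightarrow> ('a poly \<Rightarrow> int) \<Rightarrow> 'a fract poly" where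
  "shifted N z = scaled_poly (f_unit ^ N) (int (N * n)) (\<Prod>g\<in>P. g ^ nat (int N * int (f_exp g) + z g))"

lemma shifted_exponent_positive:
  assumes big: "(\<Sum>g\<in>P. \<bar>z g\<bar>) * (int n + 1) < int N" and "g \<in> P"
  shows "int N * int (f_exp g) + z g \<ge> 1"
proof -
  have "\<bar>z g\<bar> \<le> (\<Sum>g\<in>P. \<bar>z g\<bar>)" using assms(2) finite_P by (intro member_le_sum) auto
  moreover have "(\<Sum>g\<in>P. \<bar>z g\<bar>) * 1 \<le> (\<Sum>g\<in>P. \<bar>z g\<bar>) * (int n + 1)"
    by (intro mult_left_mono) (auto simp: sum_nonneg)
  moreover have "int N * 1 \<le> int N * int (f_exp g)"
    using f_factorization(3)[OF assms(2)] by (intro mult_left_mono) auto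
  ultimately show ?thesis using big by linarith
qed

lemma shifted_val_bound:
  assumes orth: "\<forall>b\<in>W. (\<Sum>g\<in>P. z g * int (val p (poly g b))) = 0"
    and big: "(\<Sum>g\<in>P. \<bar>z g\<bar>) * (int n + 1) < int N" and a: "poly f a \<noteq> 0"
  shows "int N * int n \<le> (\<Sum>g\<in>P. (int N * int (f_exp g) + z g) * int (val p (poly g a)))"
proof -
  define v where "v g = int (val p (poly g a))" for g
  define V where "V = int (val p (poly f a))"
  define C where "C = (\<Sum>g\<in>P. \<bar>z g\<bar>)"
  have V: "V = (\<Sum>g\<in>P. int (f_exp g) * v g)" unfolding V_def v_def val_f[OF a] by simp
  have split: "(\<Sum>g\<in>P. (int N * int (f_exp g) + z g) * v g) = int N * V + (\<Sum>g\<in>P. z g * v g)"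
    unfolding V by (simp add: algebra_simps sum.distrib sum_distrib_left)
  have v_le_V: "v g \<le> V" if "g \<in> P" for g
  proof -
    have "v g \<le> int (f_exp g) * v g"
      using mult_right_mono[of 1 "int (f_exp g)" "v g"] f_factorization(3)[OF that] v_def by simp
    also have "\<dots> \<le> V" unfolding V using that finite_P v_def by (intro member_le_sum) auto
    finally show ?thesis .
  qed
  show ?thesis
  proof (cases "a \<in> W")
    case True
    then show ?thesis using orth W_val split unfolding v_def V_def by simp
  next
    case False
    then have "V \<ge> int n + 1" using n_le_val[OF a] a unfolding V_def W_set_def by auto
    have "- C * V \<le> (\<Sum>g\<in>P. z g * v g)"
      unfolding C_def sum_distrib_right sum_negf[symmetric]
    proof (rule sum_mono)
      fix g assume "g \<in> P"
      then have "\<bar>z g * v g\<bar> \<le> \<bar>z g\<bar> * V"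
        using v_le_V v_def by (simp add: abs_mult mult_left_mono)
      then show "- \<bar>z g\<bar> * V \<le> z g * v g" by linarith
    qed
    moreover have "C \<ge> 0" unfolding C_def by (simp add: sum_nonneg)
    ultimately have "int N * int n \<le> int N * V + (\<Sum>g\<in>P. z g * v g)"
      using large_multiple_dominates[OF big[folded C_def] _ \<open>V \<ge> int n + 1\<close>] by simp
    then show ?thesis using split unfolding v_def by simp
  qed
qed

lemma nonroot_f_if_nonroot_prod:
  assumes "\<forall>g\<in>P. e g \<ge> 1" "poly (\<Prod>g\<in>P. g ^ e g) a \<noteq> 0"
  shows "poly f a \<noteq> 0"
proof -
  have "poly g a \<noteq> 0" if "g \<in> P" for g
    using assms that finite_P by (auto simp: poly_prod prod_zero_iff)
  then have "poly (smult f_unit (\<Prod>g\<in>P. g ^ f_exp g)) a \<noteq> 0"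
    using f_factorization(1) finite_P by (auto simp: poly_prod prod_zero_iff)
  then show ?thesis using f_factorization(2) by simp
qed

lemma shifted_in_IntR:
  assumes orth: "\<forall>b\<in>W. (\<Sum>g\<in>P. z g * int (val p (poly g b))) = 0"
    and big: "(\<Sum>g\<in>P. \<bar>z g\<bar>) * (int n + 1) < int N"
  shows "shifted N z \<in> IntR"
proof -
  define e where "e g = nat (int N * int (f_exp g) + z g)" for g
  have e: "int (e g) = int N * int (f_exp g) + z g" "e g \<ge> 1" if "g \<in> P" for g
    using shifted_exponent_positive[OF big that] unfolding e_def by auto
  have "p ^ (N * n) dvd poly (\<Prod>g\<in>P. g ^ e g) a" for a
  proof (cases "poly (\<Prod>g\<in>P. g ^ e g) a = 0")
    case False
    have fa: "poly f a \<noteq> 0" using nonroot_f_if_nonroot_prod[OF _ False] e(2) by blast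
    have "int (N * n) \<le> (\<Sum>g\<in>P. (int N * int (f_exp g) + z g) * int (val p (poly g a)))"
      using shifted_val_bound[OF orth big fa] by simp
    also have "\<dots> = int (\<Sum>g\<in>P. e g * val p (poly g a))" using e(1) by simp
    also have "(\<Sum>g\<in>P. e g * val p (poly g a)) = val p (poly (\<Prod>g\<in>P. g ^ e g) a)"
      using val_factorization[OF one_dvd fa, of e] by simp
    finally have "N * n \<le> val p (poly (\<Prod>g\<in>P. g ^ e g) a)" by (simp only: of_nat_le_iff)
    then show ?thesis using power_dvd_iff_le_val[OF False] by blast
  qed simp
  then show ?thesis
    unfolding shifted_def scaled_poly_in_IntR_iff[OF is_unit_power[OF f_factorization(1)]]
    by (simp add: e_def del: of_nat_mult)
qed

lemma shifted_mult_opposite: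
  assumes big: "(\<Sum>g\<in>P. \<bar>z g\<bar>) * (int n + 1) < int N"
  shows "shifted N z * shifted N (- z) = F ^ (2 * N)"
proof -
  define e1 where "e1 g = nat (int N * int (f_exp g) + z g)" for g
  define e2 where "e2 g = nat (int N * int (f_exp g) + (- z) g)" for g
  have big': "(\<Sum>g\<in>P. \<bar>(- z) g\<bar>) * (int n + 1) < int N" using big by simp
  have exps: "e1 g + e2 g = f_exp g * (2 * N)" if "g \<in> P" for g
  proof -
    have "int (e1 g + e2 g) = int (f_exp g * (2 * N))"
      using shifted_exponent_positive[OF big that] shifted_exponent_positive[OF big' that]
      unfolding e1_def e2_def by simp
    then show ?thesis by (simp only: of_nat_eq_iff)
  qed
  have "(\<Prod>g\<in>P. g ^ e1 g) * (\<Prod>g\<in>P. g ^ e2 g) = (\<Prod>g\<in>P. g ^ e1 g * g ^ e2 g)"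
    by (rule prod.distrib[symmetric])
  also have "\<dots> = (\<Prod>g\<in>P. (g ^ f_exp g) ^ (2 * N))"
    using exps by (intro prod.cong) (simp_all flip: power_add power_mult)
  also have "\<dots> = (\<Prod>g\<in>P. g ^ f_exp g) ^ (2 * N)" by (rule prod_power_distrib[symmetric])
  finally have prod:
    "(\<Prod>g\<in>P. g ^ e1 g) * (\<Prod>g\<in>P. g ^ e2 g) = (\<Prod>g\<in>P. g ^ f_exp g) ^ (2 * N)" .
  have "shifted N z * shifted N (- z)
      = scaled_poly (f_unit ^ N * f_unit ^ N) (int (N * n) + int (N * n))
          ((\<Prod>g\<in>P. g ^ e1 g) * (\<Prod>g\<in>P. g ^ e2 g))"
    unfolding shifted_def e1_def e2_def by (rule scaled_poly_mult)
  also have "\<dots> = scaled_poly (f_unit ^ (2 * N)) (int (2 * N * n))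
      ((\<Prod>g\<in>P. g ^ f_exp g) ^ (2 * N))"
  proof -
    have "f_unit ^ N * f_unit ^ N = f_unit ^ (2 * N)" by (simp add: mult_2 power_add)
    moreover have "int (N * n) + int (N * n) = int (2 * N * n)" by simp
    ultimately show ?thesis unfolding prod by (simp only:)
  qed
  also have "\<dots> = scaled_poly 1 (int (2 * N * n))
      (smult (f_unit ^ (2 * N)) ((\<Prod>g\<in>P. g ^ f_exp g) ^ (2 * N)))"
    by (simp only: fract_poly_smult smult_smult to_fract_1 mult_1_left mult.commute)
  also have "smult (f_unit ^ (2 * N)) ((\<Prod>g\<in>P. g ^ f_exp g) ^ (2 * N)) = f ^ (2 * N)"
    using arg_cong[OF f_factorization(2), of "\<lambda>x. x ^ (2 * N)"] by (simp add: smult_power)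
  finally show ?thesis unfolding F_power .
qed

lemma degree_shifted_positive:
  assumes big: "(\<Sum>g\<in>P. \<bar>z g\<bar>) * (int n + 1) < int N"
  shows "degree (shifted N z) \<ge> 1"
proof -
  obtain g where g: "g \<in> P"
  proof (cases "P = {}")
    case True
    have "degree f = degree (smult f_unit (\<Prod>g\<in>P. g ^ f_exp g))"
      using f_factorization(2) by (rule arg_cong)
    with True show ?thesis using degree_f by simp
  qed blast
  have "degree g * 1 \<le> degree g * nat (int N * int (f_exp g) + z g)"
    using shifted_exponent_positive[OF big g] by (intro mult_left_mono) auto
  also have "\<dots> = degree (g ^ nat (int N * int (f_exp g) + z g))"
    using P_nonzero[OF g] by (simp add: degree_power_eq)
  also have "\<dots> \<le> (\<Sum>g\<in>P. degree (g ^ nat (int N * int (f_exp g) + z g)))"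
    using g finite_P by (intro member_le_sum) auto
  also have "\<dots> = degree (\<Prod>g\<in>P. g ^ nat (int N * int (f_exp g) + z g))"
    using P_nonzero by (subst degree_prod_eq_sum_degree) auto
  finally show ?thesis
    unfolding shifted_def degree_scaled_poly[OF is_unit_power[OF f_factorization(1)]]
    using degree_P[OF g] by simp
qed

lemma shifted_eq_F_power_imp_zero:
  assumes big: "(\<Sum>g\<in>P. \<bar>z g\<bar>) * (int n + 1) < int N"
    and eq: "shifted N z = smult (to_fract V) (F ^ L)" and "V dvd 1" and g: "g \<in> P"
  shows "z g = 0"
proof -
  define e where "e g = nat (int N * int (f_exp g) + z g)" for g
  have "scaled_poly (f_unit ^ N) (int (N * n)) (\<Prod>g\<in>P. g ^ e g) = shifted N z"
    unfolding shifted_def e_def ..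
  also note eq
  also have "smult (to_fract V) (F ^ L) = scaled_poly V (int (L * n)) (f ^ L)"
    unfolding F_power by (simp only: smult_smult to_fract_1 mult_1_left)
  finally have eq':
    "scaled_poly (f_unit ^ N) (int (N * n)) (\<Prod>g\<in>P. g ^ e g) = scaled_poly V (int (L * n)) (f ^ L)" .
  have "p_primitive (\<Prod>g\<in>P. g ^ e g)"
    by (intro p_primitive_prod p_primitive_power p_primitive_P)
  from scaled_poly_unique[OF eq' this p_primitive_power[OF p_primitive_f]
      is_unit_power[OF f_factorization(1)] \<open>V dvd 1\<close>]
  obtain w where "int (N * n) = int (L * n)" "w dvd 1" "f ^ L = smult w (\<Prod>g\<in>P. g ^ e g)"
    by blast
  moreover from this(1) have "L = N" using vd_positive by simp
  ultimately have "smult w (\<Prod>g\<in>P. g ^ e g) = f ^ N" by simp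
  also have "\<dots> = smult (f_unit ^ N) (\<Prod>g\<in>P. g ^ (f_exp g * N))" by (rule f_power_factorization)
  finally have "smult w (\<Prod>g\<in>P. g ^ e g) = smult (f_unit ^ N) (\<Prod>g\<in>P. g ^ (f_exp g * N))" .
  from factorization_unique[OF this \<open>w dvd 1\<close> is_unit_power[OF f_factorization(1)] g]
  have "nat (int N * int (f_exp g) + z g) = f_exp g * N" unfolding e_def .
  then show ?thesis using shifted_exponent_positive[OF big g] by (simp add: nat_eq_iff)
qed

lemma divisor_of_F_power_assoc_if_abs_irreducible:
  assumes abs: "IntR_abs_irreducible F"
    and G: "G \<in> IntR" and H: "H \<in> IntR" and GH: "G * H = F ^ k"
    and "\<not> IntR_unit G" "\<not> IntR_unit H"
  shows "\<exists>V L. V dvd 1 \<and> G = smult (to_fract V) (F ^ L)"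
proof -
  obtain qs rs where
    qs: "\<forall>q\<in>set qs. IntR_irreducible q" "prod_list qs = G" and
    rs: "\<forall>q\<in>set rs. IntR_irreducible q" "prod_list rs = H"
    using divisor_of_F_power_factors G H GH \<open>\<not> IntR_unit G\<close> \<open>\<not> IntR_unit H\<close>
    by (metis mult.commute)
  have "k \<ge> 1"
  proof (rule ccontr)
    assume "\<not> k \<ge> 1"
    then have "G * H = 1" using GH by (simp add: not_less_eq_eq)
    then show False using G H \<open>\<not> IntR_unit G\<close> unfolding IntR_unit_def by blast
  qed
  with abs have all: "\<forall>qs. (\<forall>q\<in>set qs. IntR_irreducible q) \<and> prod_list qs = F ^ k \<longrightarrow>
      length qs = k \<and> (\<forall>q\<in>set qs. IntR_assoc q F)"
    unfolding IntR_abs_irreducible_def by blast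
  have "\<forall>q\<in>set (qs @ rs). IntR_irreducible q" "prod_list (qs @ rs) = F ^ k"
    using qs rs GH by auto
  from all[rule_format, OF conjI[OF this]] have "\<forall>q\<in>set qs. IntR_assoc q F" by simp
  then show ?thesis using prod_list_assoc_F qs(2) by blast
qed

lemma fdk_zero_if_abs_irreducible:
  assumes abs: "IntR_abs_irreducible F"
  shows "fdk_zero p f P"
proof (rule ccontr)
  assume "\<not> fdk_zero p f P"
  then obtain z g0 where orth: "\<forall>b\<in>W. (\<Sum>g\<in>P. z g * int (val p (poly g b))) = 0"
    and g0: "g0 \<in> P" "z g0 \<noteq> 0"
    by (rule integer_witness_if_not_fdk_zero)
  define N where "N = nat ((\<Sum>g\<in>P. \<bar>z g\<bar>) * (int n + 1) + 1)"
  have big: "(\<Sum>g\<in>P. \<bar>z g\<bar>) * (int n + 1) < int N"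
    unfolding N_def by (simp add: sum_nonneg)
  have big': "(\<Sum>g\<in>P. \<bar>(- z) g\<bar>) * (int n + 1) < int N" using big by simp
  have orth': "\<forall>b\<in>W. (\<Sum>g\<in>P. (- z) g * int (val p (poly g b))) = 0"
    using orth by (simp add: sum_negf)
  define A where "A = shifted N z"
  define B where "B = shifted N (- z)"
  have AB: "A * B = F ^ (2 * N)"
    unfolding A_def B_def using shifted_mult_opposite[OF big] by simp
  have IntR: "A \<in> IntR" "B \<in> IntR"
    unfolding A_def B_def using shifted_in_IntR orth orth' big big' by blast+
  have "\<not> IntR_unit A" "\<not> IntR_unit B"
    unfolding A_def B_def
    using degree_shifted_positive[OF big] degree_shifted_positive[OF big'] not_IntR_unit_if_degree
    by blast+
  then obtain V L where "V dvd 1" "A = smult (to_fract V) (F ^ L)"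
    using divisor_of_F_power_assoc_if_abs_irreducible[OF abs IntR AB(1)] by blast
  then have "z g0 = 0" using shifted_eq_F_power_imp_zero[OF big _ _ g0(1)] unfolding A_def by blast
  with g0(2) show False by contradiction
qed

end

theorem theorem2:
  fixes p :: "'a::idom" and f :: "'a poly" and P :: "'a poly set"
  assumes "dvr_with_uniformizer p"
    and "finite_residue_field p"
    and "primitive_poly f"
    and "degree f \<ge> 1"
    and "vd p f \<ge> 1"
    and "\<not> (\<exists>h k. k \<ge> 2 \<and> assoc_poly f (h ^ k))"
    and "irreducible_divisor_set f P"
  shows "IntR_abs_irreducible (smult (inverse (to_fract p ^ vd p f)) (fract_poly f))
         \<longleftrightarrow> fdk_zero p f P"
proof -
  interpret dvr p by unfold_locales (rule assms(1))
  interpret image_primitive_quotient p f P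
    using assms(3-5,7) primitive_poly_imp_p_primitive by unfold_locales auto
  show ?thesis
    unfolding F_def[symmetric]
    using fdk_zero_if_abs_irreducible abs_irreducible_if_fdk_zero[OF _ assms(6)] by blast
qed

end
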